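(* Let $A$ be a commutative DGA and $\lambda=(0\to Z\to\widetilde L\xrightarrow{\pi}L\to0)$ an MC-product data. Let $\alpha\in A^+\otimes L$ be a defining system and $X\in(A^+\otimes L)^0$. Then $\exp X\cdot\alpha$ is again a defining system and $m(\exp X\cdot\alpha)=m(\alpha)$.
   Context: All algebras are over $\mathbb{Q}$. A commutative DGA $(A,d)$ is a graded-commutative algebra $A=\bigoplus_{i\ge0}A^i$ with a degree $+1$ derivation $d$, $d^2=0$. Write $A^+=\bigoplus_{i>0}A^i$. A DGLA is a graded Lie algebra with a degree $+1$ differential which is a derivation. It is nilpotent if its lower central series terminates at $0$. For a DGLA $(L,d_L)$, $A\otimes L$ is the DGLA with total grading, bracket $[b_1\otimes w_1,b_2\otimes w_2]=(-1)^{|w_1||b_2|}b_1b_2\otimes[w_1,w_2]$ and differential $d(b\otimes w)=d_Ab\otimes w+(-1)^{|b|}b\otimes d_Lw$. For degree-one $\alpha$ put $F(\alpha)=d\alpha+\tfrac12[\alpha,\alpha]$; $\alpha$ is a Maurer–Cartan element if $F(\alpha)=0$. For a nilpotent DGLA $\Lambda$ and $X\in\Lambda^0$, the gauge action is $(\exp X)\cdot\alpha=\alpha-\sum_{i\ge0}\frac{(\operatorname{ad}X)^i}{(i+1)!}(dX+[\alpha,X])$. An MC-product data consists of: - a central extension $0\to Z\to\widetilde L\xrightarrow{\pi}L\to0$ of nilpotent DGLAs (differentials $\tilde d_L$, $d_L$) concentrated in nonpositive degrees, with $Z\subseteq\ker\tilde d_L$ and $\operatorname{Im}\tilde d_L\cap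 Z=0$; - an isomorphism $Z\cong\mathbb{Q}[q]$ ($q\le0$). A defining system is an MC element $\alpha\in A^+\otimes L$. For any degree-one lift $\tilde\alpha\in A^+\otimes\widetilde L$, $F(\tilde\alpha)\in A^+\otimes Z\cong A^+[q]$ is a cocycle of degree $2-q$ in $A$. Its class $m(\alpha)\in H^{2-q}(A)$ is independent of the lift and is the MC higher product. *)

theory Defs
  imports Complex_Main
begin

definition gsign :: "int \<Rightarrow> 'v::uminus \<Rightarrow> 'v" where
  "gsign k v = (if even k then v else - v)"

definition graded_vs :: "(rat \<Rightarrow> 'v::ab_group_add \<Rightarrow> 'v) \<Rightarrow> (int \<Rightarrow> 'v set) \<Rightarrow> bool" where
  "graded_vs s G \<longleftrightarrow> vector_space s \<and> (\<forall>i. module.subspace s (G i)) \<and>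
     (\<forall>x. \<exists>!f. finite {i. f i \<noteq> 0} \<and> (\<forall>i. f i \<in> G i) \<and> x = (\<Sum>i\<in>{i. f i \<noteq> 0}. f i))"

definition cdga :: "(rat \<Rightarrow> 'a::ring \<Rightarrow> 'a) \<Rightarrow> (int \<Rightarrow> 'a set) \<Rightarrow> ('a \<Rightarrow> 'a) \<Rightarrow> bool" where
  "cdga s G d \<longleftrightarrow> graded_vs s G \<and> (\<forall>i<0. G i = {0}) \<and>
     (\<forall>r x y. s r (x * y) = s r x * y \<and> s r (x * y) = x * s r y) \<and>
     (\<exists>e\<in>G 0. \<forall>x. e * x = x \<and> x * e = x) \<and>
     (\<forall>i j x y. x \<in> G i \<longrightarrow> y \<in> G j \<longrightarrow> x * y \<in> G (i + j)) \<and>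
     (\<forall>i j x y. x \<in> G i \<longrightarrow> y \<in> G j \<longrightarrow> x * y = gsign (i * j) (y * x)) \<and>
     Vector_Spaces.linear s s d \<and> (\<forall>i x. x \<in> G i \<longrightarrow> d x \<in> G (i + 1)) \<and>
     (\<forall>x. d (d x) = 0) \<and>
     (\<forall>i x y. x \<in> G i \<longrightarrow> d (x * y) = d x * y + gsign i (x * d y))"

definition dgla :: "(rat \<Rightarrow> 'l::ab_group_add \<Rightarrow> 'l) \<Rightarrow> (int \<Rightarrow> 'l set) \<Rightarrow>
    ('l \<Rightarrow> 'l \<Rightarrow> 'l) \<Rightarrow> ('l \<Rightarrow> 'l) \<Rightarrow> bool" where
  "dgla s G br d \<longleftrightarrow> graded_vs s G \<and>
     (\<forall>x. Vector_Spaces.linear s s (br x)) \<and> (\<forall>y. Vector_Spaces.linear s s (\<lambda>x. br x y)) \<and>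
     (\<forall>i j x y. x \<in> G i \<longrightarrow> y \<in> G j \<longrightarrow> br x y \<in> G (i + j)) \<and>
     (\<forall>i j x y. x \<in> G i \<longrightarrow> y \<in> G j \<longrightarrow> br x y = - gsign (i * j) (br y x)) \<and>
     (\<forall>i j x y z. x \<in> G i \<longrightarrow> y \<in> G j \<longrightarrow>
        br x (br y z) = br (br x y) z + gsign (i * j) (br y (br x z))) \<and>
     Vector_Spaces.linear s s d \<and> (\<forall>i x. x \<in> G i \<longrightarrow> d x \<in> G (i + 1)) \<and>
     (\<forall>x. d (d x) = 0) \<and>
     (\<forall>i x y. x \<in> G i \<longrightarrow> d (br x y) = br (d x) y + gsign i (br x (d y)))"

fun lcs :: "(rat \<Rightarrow> 'l::ab_group_add \<Rightarrow> 'l) \<Rightarrow> ('l \<Rightarrow> 'l \<Rightarrow> 'l) \<Rightarrow> nat \<Rightarrow> 'l set" where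
  "lcs s br 0 = UNIV"
| "lcs s br (Suc k) = module.span s {br x y | x y. y \<in> lcs s br k}"

definition nilpotent_la :: "(rat \<Rightarrow> 'l::ab_group_add \<Rightarrow> 'l) \<Rightarrow> ('l \<Rightarrow> 'l \<Rightarrow> 'l) \<Rightarrow> bool" where
  "nilpotent_la s br \<longleftrightarrow> (\<exists>k. lcs s br k = {0})"

definition nonpositive :: "(int \<Rightarrow> 'l::zero set) \<Rightarrow> bool" where
  "nonpositive G \<longleftrightarrow> (\<forall>i>0. G i = {0})"

definition dgla_hom :: "(rat \<Rightarrow> 'm::ab_group_add \<Rightarrow> 'm) \<Rightarrow> (int \<Rightarrow> 'm set) \<Rightarrow>
    ('m \<Rightarrow> 'm \<Rightarrow> 'm) \<Rightarrow> ('m \<Rightarrow> 'm) \<Rightarrow>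
    (rat \<Rightarrow> 'l::ab_group_add \<Rightarrow> 'l) \<Rightarrow> (int \<Rightarrow> 'l set) \<Rightarrow> ('l \<Rightarrow> 'l \<Rightarrow> 'l) \<Rightarrow> ('l \<Rightarrow> 'l) \<Rightarrow>
    ('m \<Rightarrow> 'l) \<Rightarrow> bool" where
  "dgla_hom s1 G1 br1 d1 s2 G2 br2 d2 f \<longleftrightarrow> Vector_Spaces.linear s1 s2 f \<and>
     (\<forall>i x. x \<in> G1 i \<longrightarrow> f x \<in> G2 i) \<and> (\<forall>x y. f (br1 x y) = br2 (f x) (f y)) \<and>
     (\<forall>x. f (d1 x) = d2 (f x))"

text \<open>Central extension 0 -> Z -> Lt -> L -> 0 with Z = ker pi, together with the
  isomorphism Z = Q[q] given by the generator z (image of 1) of degree q.\<close>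

definition mc_product_data ::
  "(rat \<Rightarrow> 'm::ab_group_add \<Rightarrow> 'm) \<Rightarrow> (int \<Rightarrow> 'm set) \<Rightarrow> ('m \<Rightarrow> 'm \<Rightarrow> 'm) \<Rightarrow> ('m \<Rightarrow> 'm) \<Rightarrow>
   (rat \<Rightarrow> 'l::ab_group_add \<Rightarrow> 'l) \<Rightarrow> (int \<Rightarrow> 'l set) \<Rightarrow> ('l \<Rightarrow> 'l \<Rightarrow> 'l) \<Rightarrow> ('l \<Rightarrow> 'l) \<Rightarrow>
   ('m \<Rightarrow> 'l) \<Rightarrow> int \<Rightarrow> 'm \<Rightarrow> bool" where
  "mc_product_data st Gt brt dt s G br d \<pi> q z \<longleftrightarrow>
     dgla st Gt brt dt \<and> dgla s G br d \<and> nilpotent_la st brt \<and> nilpotent_la s br \<and>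
     nonpositive Gt \<and> nonpositive G \<and>
     dgla_hom st Gt brt dt s G br d \<pi> \<and> surj \<pi> \<and>
     (\<forall>x y. \<pi> x = 0 \<longrightarrow> brt x y = 0) \<and>
     (\<forall>x. \<pi> x = 0 \<longrightarrow> dt x = 0) \<and>
     (\<forall>x. \<pi> (dt x) = 0 \<longrightarrow> dt x = 0) \<and>
     q \<le> 0 \<and> z \<in> Gt q \<and> z \<noteq> 0 \<and> {x. \<pi> x = 0} = range (\<lambda>r. st r z)"

text \<open>An element of A (x) V is represented by a finite formal sum (list) of pure tensors
  a (x) w of homogeneous elements, each entry recording (deg a, a, deg w, w).
  Two formal sums represent the same element of the tensor product iff they agree under
  every pair of linear functionals phi : A -> Q, psi : V -> Q (over a field the tensor
  product embeds into such bilinear evaluations).\<close>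

type_synonym ('a, 'v) tens = "(int \<times> 'a \<times> int \<times> 'v) list"

definition tpair :: "('a \<Rightarrow> rat) \<Rightarrow> ('v \<Rightarrow> rat) \<Rightarrow> ('a, 'v) tens \<Rightarrow> rat" where
  "tpair \<phi> \<psi> t = (\<Sum>(i, a, j, w)\<leftarrow>t. \<phi> a * \<psi> w)"

definition teq :: "(rat \<Rightarrow> 'a::ab_group_add \<Rightarrow> 'a) \<Rightarrow> (rat \<Rightarrow> 'v::ab_group_add \<Rightarrow> 'v) \<Rightarrow>
    ('a, 'v) tens \<Rightarrow> ('a, 'v) tens \<Rightarrow> bool" where
  "teq sa sv t1 t2 \<longleftrightarrow> (\<forall>\<phi> \<psi>. Vector_Spaces.linear sa (*) \<phi> \<longrightarrow> Vector_Spaces.linear sv (*) \<psi> \<longrightarrow>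
      tpair \<phi> \<psi> t1 = tpair \<phi> \<psi> t2)"

text \<open>Well-formed representative of an element of A^+ (x) V.\<close>
definition tplus :: "(int \<Rightarrow> 'a set) \<Rightarrow> (int \<Rightarrow> 'v set) \<Rightarrow> ('a, 'v) tens \<Rightarrow> bool" where
  "tplus GA GV t \<longleftrightarrow> (\<forall>(i, a, j, w)\<in>set t. 0 < i \<and> a \<in> GA i \<and> w \<in> GV j)"

definition tdeg :: "int \<Rightarrow> ('a, 'v) tens \<Rightarrow> bool" where
  "tdeg n t \<longleftrightarrow> (\<forall>(i, a, j, w)\<in>set t. i + j = n)"

definition tneg :: "('a::uminus, 'v) tens \<Rightarrow> ('a, 'v) tens" where
  "tneg t = map (\<lambda>(i, a, j, w). (i, - a, j, w)) t"

definition tscale :: "(rat \<Rightarrow> 'a \<Rightarrow> 'a) \<Rightarrow> rat \<Rightarrow> ('a, 'v) tens \<Rightarrow> ('a, 'v) tens" where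
  "tscale sa r t = map (\<lambda>(i, a, j, w). (i, sa r a, j, w)) t"

definition tmap :: "('v \<Rightarrow> 'u) \<Rightarrow> ('a, 'v) tens \<Rightarrow> ('a, 'u) tens" where
  "tmap f t = map (\<lambda>(i, a, j, w). (i, a, j, f w)) t"

definition tbr :: "('v \<Rightarrow> 'v \<Rightarrow> 'v) \<Rightarrow> ('a::ring, 'v) tens \<Rightarrow> ('a, 'v) tens \<Rightarrow> ('a, 'v) tens" where
  "tbr br t1 t2 = concat (map (\<lambda>(i1, a1, j1, w1). map (\<lambda>(i2, a2, j2, w2).
      (i1 + i2, gsign (j1 * i2) (a1 * a2), j1 + j2, br w1 w2)) t2) t1)"

definition tdiff :: "('a \<Rightarrow> 'a) \<Rightarrow> ('v \<Rightarrow> 'v) \<Rightarrow> ('a::uminus, 'v) tens \<Rightarrow> ('a, 'v) tens" where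
  "tdiff dA dV t = concat (map (\<lambda>(i, a, j, w). [(i + 1, dA a, j, w), (i, gsign i a, j + 1, dV w)]) t)"

definition tF :: "(rat \<Rightarrow> 'a \<Rightarrow> 'a) \<Rightarrow> ('a \<Rightarrow> 'a) \<Rightarrow> ('v \<Rightarrow> 'v \<Rightarrow> 'v) \<Rightarrow> ('v \<Rightarrow> 'v) \<Rightarrow>
    ('a::ring, 'v) tens \<Rightarrow> ('a, 'v) tens" where
  "tF sa dA br dV t = tdiff dA dV t @ tscale sa (1 / 2) (tbr br t t)"

definition gauge_term :: "(rat \<Rightarrow> 'a \<Rightarrow> 'a) \<Rightarrow> ('a \<Rightarrow> 'a) \<Rightarrow> ('v \<Rightarrow> 'v \<Rightarrow> 'v) \<Rightarrow> ('v \<Rightarrow> 'v) \<Rightarrow>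
    ('a::ring, 'v) tens \<Rightarrow> ('a, 'v) tens \<Rightarrow> nat \<Rightarrow> ('a, 'v) tens" where
  "gauge_term sa dA br dV X \<alpha> k =
     tscale sa (1 / fact (k + 1)) ((tbr br X ^^ k) (tdiff dA dV X @ tbr br \<alpha> X))"

definition gauge_partial :: "(rat \<Rightarrow> 'a \<Rightarrow> 'a) \<Rightarrow> ('a \<Rightarrow> 'a) \<Rightarrow> ('v \<Rightarrow> 'v \<Rightarrow> 'v) \<Rightarrow> ('v \<Rightarrow> 'v) \<Rightarrow>
    ('a::ring, 'v) tens \<Rightarrow> ('a, 'v) tens \<Rightarrow> nat \<Rightarrow> ('a, 'v) tens" where
  "gauge_partial sa dA br dV X \<alpha> M = concat (map (gauge_term sa dA br dV X \<alpha>) [0..<M])"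

text \<open>The series is eventually constant (nilpotency); its value is the partial sum at
  the first index from which the partial sums no longer change in A (x) V.\<close>
definition gauge :: "(rat \<Rightarrow> 'a \<Rightarrow> 'a) \<Rightarrow> (rat \<Rightarrow> 'v::ab_group_add \<Rightarrow> 'v) \<Rightarrow> ('a \<Rightarrow> 'a) \<Rightarrow>
    ('v \<Rightarrow> 'v \<Rightarrow> 'v) \<Rightarrow> ('v \<Rightarrow> 'v) \<Rightarrow> ('a::ring, 'v) tens \<Rightarrow> ('a, 'v) tens \<Rightarrow> ('a, 'v) tens" where
  "gauge sa sv dA br dV X \<alpha> =
     \<alpha> @ tneg (gauge_partial sa dA br dV X \<alpha>
        (LEAST M. \<forall>M'\<ge>M. teq sa sv (gauge_partial sa dA br dV X \<alpha> M') (gauge_partial sa dA br dV X \<alpha> M)))"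

definition defining_system :: "(rat \<Rightarrow> 'a \<Rightarrow> 'a) \<Rightarrow> (int \<Rightarrow> 'a set) \<Rightarrow> ('a \<Rightarrow> 'a) \<Rightarrow>
    (rat \<Rightarrow> 'v::ab_group_add \<Rightarrow> 'v) \<Rightarrow> (int \<Rightarrow> 'v set) \<Rightarrow> ('v \<Rightarrow> 'v \<Rightarrow> 'v) \<Rightarrow> ('v \<Rightarrow> 'v) \<Rightarrow>
    ('a::ring, 'v) tens \<Rightarrow> bool" where
  "defining_system sa GA dA sv GV br dV \<alpha> \<longleftrightarrow>
     tplus GA GV \<alpha> \<and> tdeg 1 \<alpha> \<and> teq sa sv (tF sa dA br dV \<alpha>) []"

definition coh_class :: "(int \<Rightarrow> 'a set) \<Rightarrow> ('a \<Rightarrow> 'a) \<Rightarrow> int \<Rightarrow> 'a::ab_group_add \<Rightarrow> 'a set" where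
  "coh_class GA dA n c = {c + dA b | b. b \<in> GA (n - 1)}"

text \<open>c represents F(alpha~) under A^+ (x) Z = A^+[q], c (x) z |-> c, for some degree-one lift
  alpha~ in A^+ (x) Lt of alpha.\<close>
definition mc_rep :: "(rat \<Rightarrow> 'a \<Rightarrow> 'a) \<Rightarrow> (int \<Rightarrow> 'a set) \<Rightarrow> ('a \<Rightarrow> 'a) \<Rightarrow>
   (rat \<Rightarrow> 'm::ab_group_add \<Rightarrow> 'm) \<Rightarrow> (int \<Rightarrow> 'm set) \<Rightarrow> ('m \<Rightarrow> 'm \<Rightarrow> 'm) \<Rightarrow> ('m \<Rightarrow> 'm) \<Rightarrow>
   (rat \<Rightarrow> 'l::ab_group_add \<Rightarrow> 'l) \<Rightarrow> ('m \<Rightarrow> 'l) \<Rightarrow> int \<Rightarrow> 'm \<Rightarrow>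
   ('a::ring, 'l) tens \<Rightarrow> 'a \<Rightarrow> bool" where
  "mc_rep sa GA dA st Gt brt dt s \<pi> q z \<alpha> c \<longleftrightarrow>
     (\<exists>\<alpha>t. tplus GA Gt \<alpha>t \<and> tdeg 1 \<alpha>t \<and> teq sa s (tmap \<pi> \<alpha>t) \<alpha> \<and>
        c \<in> GA (2 - q) \<and> teq sa st (tF sa dA brt dt \<alpha>t) [(2 - q, c, q, z)])"

definition mc_product :: "(rat \<Rightarrow> 'a \<Rightarrow> 'a) \<Rightarrow> (int \<Rightarrow> 'a set) \<Rightarrow> ('a \<Rightarrow> 'a) \<Rightarrow>
   (rat \<Rightarrow> 'm::ab_group_add \<Rightarrow> 'm) \<Rightarrow> (int \<Rightarrow> 'm set) \<Rightarrow> ('m \<Rightarrow> 'm \<Rightarrow> 'm) \<Rightarrow> ('m \<Rightarrow> 'm) \<Rightarrow>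
   (rat \<Rightarrow> 'l::ab_group_add \<Rightarrow> 'l) \<Rightarrow> ('m \<Rightarrow> 'l) \<Rightarrow> int \<Rightarrow> 'm \<Rightarrow>
   ('a::ring, 'l) tens \<Rightarrow> 'a set" where
  "mc_product sa GA dA st Gt brt dt s \<pi> q z \<alpha> =
     (THE C. \<exists>c. mc_rep sa GA dA st Gt brt dt s \<pi> q z \<alpha> c \<and> C = coh_class GA dA (2 - q) c)"

end

theory Submission
  imports Defs
begin

text \<open>
  Adjoin to \<open>A\<^sup>+ \<otimes> L\<close> a formal element \<open>\<delta>\<close> of degree one with \<open>[\<delta>, x] = d x\<close> and
  \<open>[\<delta>, \<delta>] = 0\<close>. Then \<open>2 F(\<alpha>) = [\<delta> + \<alpha>, \<delta> + \<alpha>]\<close> and \<open>\<delta> + exp X \<cdot> \<alpha> = exp (ad X) (\<delta> + \<alpha>)\<close>, a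
  finite sum by nilpotency. Since \<open>X\<close> has degree zero, \<open>ad X\<close> is a derivation of the bracket,
  so by the Leibniz rule and the Cauchy product \<open>exp (ad X)\<close> preserves it:
  \<open>F(exp X \<cdot> \<alpha>) = exp (ad X) F(\<alpha>)\<close>.

  For the higher product, lift \<open>\<alpha>\<close> and \<open>X\<close> to \<open>\<alpha>'\<close> and \<open>X'\<close> in \<open>A\<^sup>+ \<otimes> Lt\<close>. Then
  \<open>exp X' \<cdot> \<alpha>'\<close> lifts \<open>exp X \<cdot> \<alpha>\<close>, and since \<open>F(\<alpha>')\<close> lies in the central part \<open>A\<^sup>+ \<otimes> Z\<close>, on which
  \<open>ad X'\<close> vanishes, \<open>F(exp X' \<cdot> \<alpha>') = F(\<alpha>')\<close>: both defining systems have the same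
  representative. Different lifts change the representative only by a coboundary.

  Formal tensors are compared through their pairings with all products \<open>\<phi> \<otimes> \<psi>\<close> of linear
  functionals, so every identity in \<open>A\<^sup>+ \<otimes> L\<close> is checked on pure tensors after pairing.
\<close>

section \<open>Signs and graded vector spaces\<close>

lemma gsign_add: "gsign k (x + y) = gsign k x + gsign k (y::'v::ab_group_add)"
  by (simp add: gsign_def)

lemma gsign_0 [simp]: "gsign k (0::'v::ab_group_add) = 0"
  by (simp add: gsign_def)

lemma gsign_neg: "gsign k (- x) = - gsign k (x::'v::ab_group_add)"
  by (simp add: gsign_def)

lemma gsign_mult_left: "gsign k x * y = gsign k (x * (y::'a::ring))"
  by (simp add: gsign_def)

lemma gsign_mult_right: "x * gsign k y = gsign k (x * (y::'a::ring))"
  by (simp add: gsign_def)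

definition sgn_int :: "int \<Rightarrow> rat" where
  "sgn_int k = (if even k then 1 else -1)"

lemma gsign_rat: "gsign k (r::rat) = sgn_int k * r"
  by (simp add: gsign_def sgn_int_def)

definition homog_comp :: "(int \<Rightarrow> 'v::ab_group_add set) \<Rightarrow> 'v \<Rightarrow> int \<Rightarrow> 'v" where
  "homog_comp G x = (THE f. finite {i. f i \<noteq> 0} \<and> (\<forall>i. f i \<in> G i) \<and> x = (\<Sum>i\<in>{i. f i \<noteq> 0}. f i))"

definition parity :: "(int \<Rightarrow> 'v::ab_group_add set) \<Rightarrow> 'v \<Rightarrow> 'v" where
  "parity G x = (\<Sum>i\<in>{i. homog_comp G x i \<noteq> 0}. gsign i (homog_comp G x i))"

context
  fixes s :: "rat \<Rightarrow> 'v::ab_group_add \<Rightarrow> 'v" and G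
  assumes graded: "graded_vs s G"
begin

lemma graded_vector_space: "vector_space s"
  using graded by (simp add: graded_vs_def)

interpretation V: vector_space s by (rule graded_vector_space)

lemma graded_subspace: "V.subspace (G i)"
  using graded by (simp add: graded_vs_def)

lemma graded_zero: "0 \<in> G i"
  using graded_subspace V.subspace_0 by blast

lemma graded_add: "x \<in> G i \<Longrightarrow> y \<in> G i \<Longrightarrow> x + y \<in> G i"
  using graded_subspace V.subspace_add by blast

lemma graded_scale: "x \<in> G i \<Longrightarrow> s c x \<in> G i"
  using graded_subspace V.subspace_scale by blast

lemma graded_neg: "x \<in> G i \<Longrightarrow> - x \<in> G i"
  using graded_subspace V.subspace_neg by blast

lemma graded_gsign: "x \<in> G i \<Longrightarrow> gsign k x \<in> G i"
  using graded_neg by (simp add: gsign_def)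

lemma graded_sum_list: "(\<And>x. x \<in> set xs \<Longrightarrow> x \<in> G i) \<Longrightarrow> sum_list xs \<in> G i"
  by (induct xs) (auto intro: graded_zero graded_add)

lemma homog_comp_decomp:
  "finite {i. homog_comp G x i \<noteq> 0} \<and> (\<forall>i. homog_comp G x i \<in> G i) \<and>
     x = (\<Sum>i\<in>{i. homog_comp G x i \<noteq> 0}. homog_comp G x i)"
proof -
  have "\<exists>!f. finite {i. f i \<noteq> 0} \<and> (\<forall>i. f i \<in> G i) \<and> x = (\<Sum>i\<in>{i. f i \<noteq> 0}. f i)"
    using graded by (simp add: graded_vs_def)
  then show ?thesis unfolding homog_comp_def by (rule theI')
qed

lemma homog_comp_in: "homog_comp G x i \<in> G i"
  using homog_comp_decomp by blast

lemma homog_comp_unique: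
  assumes "finite S" "\<And>i. i \<notin> S \<Longrightarrow> f i = 0" "\<And>i. f i \<in> G i" "x = (\<Sum>i\<in>S. f i)"
  shows "homog_comp G x = f"
proof -
  have unique: "\<exists>!f. finite {i. f i \<noteq> 0} \<and> (\<forall>i. f i \<in> G i) \<and> x = (\<Sum>i\<in>{i. f i \<noteq> 0}. f i)"
    using graded by (simp add: graded_vs_def)
  have supp: "{i. f i \<noteq> 0} \<subseteq> S" using assms(2) by blast
  have "(\<Sum>i\<in>S. f i) = (\<Sum>i\<in>{i. f i \<noteq> 0}. f i)"
    by (rule sum.mono_neutral_right[OF assms(1) supp]) auto
  then have "finite {i. f i \<noteq> 0} \<and> (\<forall>i. f i \<in> G i) \<and> x = (\<Sum>i\<in>{i. f i \<noteq> 0}. f i)"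
    using finite_subset[OF supp assms(1)] assms(3,4) by auto
  then show ?thesis using unique homog_comp_decomp by blast
qed

lemma homog_comp_sum:
  assumes "finite S" "{i. homog_comp G x i \<noteq> 0} \<subseteq> S"
  shows "x = (\<Sum>i\<in>S. homog_comp G x i)"
proof -
  have "(\<Sum>i\<in>S. homog_comp G x i) = (\<Sum>i\<in>{i. homog_comp G x i \<noteq> 0}. homog_comp G x i)"
    by (rule sum.mono_neutral_right[OF assms]) auto
  then show ?thesis using homog_comp_decomp by simp
qed

lemma homog_comp_add: "homog_comp G (x + y) = (\<lambda>i. homog_comp G x i + homog_comp G y i)"
proof (rule homog_comp_unique)
  let ?S = "{i. homog_comp G x i \<noteq> 0} \<union> {i. homog_comp G y i \<noteq> 0}"
  show "finite ?S" using homog_comp_decomp by blast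
  show "\<And>i. i \<notin> ?S \<Longrightarrow> homog_comp G x i + homog_comp G y i = 0" by auto
  show "\<And>i. homog_comp G x i + homog_comp G y i \<in> G i" using homog_comp_in graded_add by blast
  have "x = (\<Sum>i\<in>?S. homog_comp G x i)" "y = (\<Sum>i\<in>?S. homog_comp G y i)"
    by (rule homog_comp_sum; use homog_comp_decomp in auto)+
  then show "x + y = (\<Sum>i\<in>?S. homog_comp G x i + homog_comp G y i)"
    by (simp add: sum.distrib)
qed

lemma homog_comp_scale: "homog_comp G (s c x) = (\<lambda>i. s c (homog_comp G x i))"
proof (rule homog_comp_unique)
  let ?S = "{i. homog_comp G x i \<noteq> 0}"
  show "finite ?S" using homog_comp_decomp by blast
  show "\<And>i. i \<notin> ?S \<Longrightarrow> s c (homog_comp G x i) = 0" by auto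
  show "\<And>i. s c (homog_comp G x i) \<in> G i" using homog_comp_in graded_scale by blast
  have "x = (\<Sum>i\<in>?S. homog_comp G x i)" using homog_comp_decomp by blast
  then show "s c x = (\<Sum>i\<in>?S. s c (homog_comp G x i))"
    by (metis V.scale_sum_right)
qed

lemma homog_comp_homog: "x \<in> G j \<Longrightarrow> homog_comp G x = (\<lambda>i. if i = j then x else 0)"
  by (rule homog_comp_unique[where S="{j}"]) (auto simp: graded_zero)

lemma linear_homog_comp: "Vector_Spaces.linear s s (\<lambda>x. homog_comp G x j)"
  by (rule Vector_Spaces.linear_iff[THEN iffD2])
    (use graded_vector_space in \<open>simp add: homog_comp_add homog_comp_scale\<close>)

lemma parity_eq_sum:
  assumes "finite S" "{i. homog_comp G x i \<noteq> 0} \<subseteq> S"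
  shows "parity G x = (\<Sum>i\<in>S. gsign i (homog_comp G x i))"
  unfolding parity_def by (rule sum.mono_neutral_left[OF assms]) auto

lemma parity_homog: "x \<in> G j \<Longrightarrow> parity G x = gsign j x"
  by (subst parity_eq_sum[where S="{j}"]) (auto simp: homog_comp_homog)

lemma parity_add: "parity G (x + y) = parity G x + parity G y"
proof -
  let ?S = "{i. homog_comp G x i \<noteq> 0} \<union> {i. homog_comp G y i \<noteq> 0}"
  have fin: "finite ?S" using homog_comp_decomp by blast
  have "parity G (x + y) = (\<Sum>i\<in>?S. gsign i (homog_comp G (x + y) i))"
    by (rule parity_eq_sum[OF fin]) (auto simp: homog_comp_add)
  also have "\<dots> = (\<Sum>i\<in>?S. gsign i (homog_comp G x i)) + (\<Sum>i\<in>?S. gsign i (homog_comp G y i))"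
    by (simp add: homog_comp_add gsign_add sum.distrib)
  finally show ?thesis by (simp add: parity_eq_sum[OF fin])
qed

lemma gsign_scale: "gsign k (s c x) = s c (gsign k x)"
  by (simp add: gsign_def)

lemma parity_scale: "parity G (s c x) = s c (parity G x)"
proof -
  let ?S = "{i. homog_comp G x i \<noteq> 0}"
  have fin: "finite ?S" using homog_comp_decomp by blast
  have "parity G (s c x) = (\<Sum>i\<in>?S. gsign i (homog_comp G (s c x) i))"
    by (rule parity_eq_sum[OF fin]) (auto simp: homog_comp_scale)
  then show ?thesis
    by (simp add: homog_comp_scale gsign_scale parity_def V.scale_sum_right)
qed

lemma linear_parity: "Vector_Spaces.linear s s (parity G)"
  by (rule Vector_Spaces.linear_iff[THEN iffD2])
    (use graded_vector_space parity_add parity_scale in blast)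

end

section \<open>Rational linear functionals\<close>

definition lin_functional :: "(rat \<Rightarrow> 'v::ab_group_add \<Rightarrow> 'v) \<Rightarrow> ('v \<Rightarrow> rat) \<Rightarrow> bool" where
  "lin_functional s f \<longleftrightarrow> (\<forall>x y. f (x + y) = f x + f y) \<and> (\<forall>c x. f (s c x) = c * f x)"

lemma vector_space_rat: "vector_space ((*) :: rat \<Rightarrow> rat \<Rightarrow> rat)"
  by unfold_locales (auto simp: algebra_simps)

lemma linear_iff_lin_functional:
  "vector_space s \<Longrightarrow> Vector_Spaces.linear s (*) f \<longleftrightarrow> lin_functional s f"
  unfolding Vector_Spaces.linear_iff lin_functional_def using vector_space_rat by auto

context
  fixes s :: "rat \<Rightarrow> 'v::ab_group_add \<Rightarrow> 'v" and f :: "'v \<Rightarrow> rat"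
  assumes f: "lin_functional s f"
begin

lemma lin_functional_add: "f (x + y) = f x + f y"
  using f by (simp add: lin_functional_def)

lemma lin_functional_scale: "f (s c x) = c * f x"
  using f by (simp add: lin_functional_def)

lemma lin_functional_0: "f 0 = 0"
  using lin_functional_add[of 0 0] by simp

lemma lin_functional_neg: "f (- x) = - f x"
  using lin_functional_add[of x "- x"] lin_functional_0 by (simp add: eq_neg_iff_add_eq_0)

lemma lin_functional_diff: "f (x - y) = f x - f y"
  using lin_functional_add[of x "- y"] lin_functional_neg[of y] by simp

lemma lin_functional_gsign: "f (gsign k x) = gsign k (f x)"
  by (simp add: gsign_def lin_functional_neg)

lemma lin_functional_sum_list: "f (sum_list xs) = (\<Sum>x\<leftarrow>xs. f x)"
  by (induct xs) (auto simp: lin_functional_0 lin_functional_add)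

end

lemma lin_functional_comp:
  "Vector_Spaces.linear s1 s2 g \<Longrightarrow> lin_functional s2 f \<Longrightarrow> lin_functional s1 (\<lambda>x. f (g x))"
  unfolding lin_functional_def Vector_Spaces.linear_iff by auto

lemma exists_lin_functional_eq_1:
  assumes vs: "vector_space s" and x: "x \<noteq> 0"
  shows "\<exists>f. lin_functional s f \<and> f x = 1"
proof -
  interpret P: vector_space_pair s "(*) :: rat \<Rightarrow> rat \<Rightarrow> rat"
    by (simp add: vector_space_pair_def vs vector_space_rat)
  have ind: "P.vs1.independent {x}"
    using x by (intro P.vs1.independent_insertI) (auto simp: P.vs1.span_empty P.vs1.independent_empty)
  have "Vector_Spaces.linear s (*) (P.construct {x} (\<lambda>_. 1))"
    by (rule P.linear_construct[OF ind])
  moreover have "P.construct {x} (\<lambda>_. 1) x = 1" by (rule P.construct_basis[OF ind]) simp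
  ultimately show ?thesis using linear_iff_lin_functional[OF vs] by blast
qed

lemma lin_functionals_separate:
  assumes vs: "vector_space s" and eq: "\<And>f. lin_functional s f \<Longrightarrow> f x = f y"
  shows "x = y"
proof (rule ccontr)
  assume "x \<noteq> y"
  then have "x - y \<noteq> 0" by simp
  then obtain f where f: "lin_functional s f" "f (x - y) = 1"
    using exists_lin_functional_eq_1[OF vs] by blast
  then show False using eq[OF f(1)] lin_functional_diff[OF f(1)] by simp
qed

lemma linear_add: "Vector_Spaces.linear s1 s2 f \<Longrightarrow> f (x + y) = f x + f y"
  unfolding Vector_Spaces.linear_iff by blast

lemma linear_scale: "Vector_Spaces.linear s1 s2 f \<Longrightarrow> f (s1 c x) = s2 c (f x)"
  unfolding Vector_Spaces.linear_iff by blast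

lemma linear_0: "Vector_Spaces.linear s1 s2 f \<Longrightarrow> f 0 = 0"
  using linear_add[of s1 s2 f 0 0] by simp

lemma linear_neg: "Vector_Spaces.linear s1 s2 f \<Longrightarrow> f (- x) = - f x"
  using linear_add[of s1 s2 f x "- x"] linear_0[of s1 s2 f]
  by (simp add: eq_neg_iff_add_eq_0 add.commute)

lemma linear_diff: "Vector_Spaces.linear s1 s2 f \<Longrightarrow> f (x - y) = f x - f y"
  using linear_add[of s1 s2 f x "- y"] linear_neg[of s1 s2 f y] by simp

lemma linear_gsign: "Vector_Spaces.linear s1 s2 f \<Longrightarrow> f (gsign k x) = gsign k (f x)"
  by (simp add: gsign_def linear_neg)

lemma linear_sum: "Vector_Spaces.linear s1 s2 f \<Longrightarrow> f (sum g S) = (\<Sum>i\<in>S. f (g i))"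
  by (induct S rule: infinite_finite_induct) (auto simp: linear_0 linear_add)

section \<open>Pairing formal tensors with functionals\<close>

type_synonym ('a, 'v) pure = "int \<times> 'a \<times> int \<times> 'v"

fun pure_pair :: "('a \<Rightarrow> rat) \<Rightarrow> ('v \<Rightarrow> rat) \<Rightarrow> ('a, 'v) pure \<Rightarrow> rat" where
  "pure_pair \<phi> \<psi> (i, a, j, w) = \<phi> a * \<psi> w"

fun pure_br :: "('v \<Rightarrow> 'v \<Rightarrow> 'v) \<Rightarrow> ('a::ring, 'v) pure \<Rightarrow> ('a, 'v) pure \<Rightarrow> ('a, 'v) pure" where
  "pure_br br (i1, a1, j1, w1) (i2, a2, j2, w2) = (i1 + i2, gsign (j1 * i2) (a1 * a2), j1 + j2, br w1 w2)"

fun pure_dA :: "('a \<Rightarrow> 'a) \<Rightarrow> ('a, 'v) pure \<Rightarrow> ('a, 'v) pure" where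
  "pure_dA dA (i, a, j, w) = (i + 1, dA a, j, w)"

fun pure_dV :: "('v \<Rightarrow> 'v) \<Rightarrow> ('a::uminus, 'v) pure \<Rightarrow> ('a, 'v) pure" where
  "pure_dV dV (i, a, j, w) = (i, gsign i a, j + 1, dV w)"

fun pure_scale :: "(rat \<Rightarrow> 'a \<Rightarrow> 'a) \<Rightarrow> rat \<Rightarrow> ('a, 'v) pure \<Rightarrow> ('a, 'v) pure" where
  "pure_scale sa r (i, a, j, w) = (i, sa r a, j, w)"

fun pure_neg :: "('a::uminus, 'v) pure \<Rightarrow> ('a, 'v) pure" where
  "pure_neg (i, a, j, w) = (i, - a, j, w)"

fun pure_map :: "('v \<Rightarrow> 'u) \<Rightarrow> ('a, 'v) pure \<Rightarrow> ('a, 'u) pure" where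
  "pure_map f (i, a, j, w) = (i, a, j, f w)"

lemma tpair_eq_sum_list: "tpair \<phi> \<psi> t = (\<Sum>e\<leftarrow>t. pure_pair \<phi> \<psi> e)"
proof -
  have "(\<lambda>(i, a, j, w). \<phi> a * \<psi> w) = pure_pair \<phi> \<psi>" by (auto simp: fun_eq_iff)
  then show ?thesis unfolding tpair_def by simp
qed

lemma tbr_eq_concat: "tbr br t1 t2 = concat (map (\<lambda>e1. map (pure_br br e1) t2) t1)"
proof -
  have "(\<lambda>(i1, a1, j1, w1). map (\<lambda>(i2, a2, j2, w2).
      (i1 + i2, gsign (j1 * i2) (a1 * a2), j1 + j2, br w1 w2)) t2) = (\<lambda>e1. map (pure_br br e1) t2)"
    by (auto simp: fun_eq_iff intro!: map_cong)
  then show ?thesis unfolding tbr_def by simp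
qed

lemma set_tbr: "e \<in> set (tbr br u v) \<Longrightarrow> \<exists>x\<in>set u. \<exists>f\<in>set v. e = pure_br br x f"
  unfolding tbr_eq_concat by auto

lemma tdiff_eq_concat: "tdiff dA dV t = concat (map (\<lambda>e. [pure_dA dA e, pure_dV dV e]) t)"
proof -
  have "(\<lambda>(i, a, j, w). [(i + 1, dA a, j, w), (i, gsign i a, j + 1, dV w)]) =
      (\<lambda>e. [pure_dA dA e, pure_dV dV e])"
    by (auto simp: fun_eq_iff)
  then show ?thesis unfolding tdiff_def by simp
qed

lemma tscale_eq_map: "tscale sa r t = map (pure_scale sa r) t"
  unfolding tscale_def by (intro map_cong) auto

lemma tneg_eq_map: "tneg t = map pure_neg t"
  unfolding tneg_def by (intro map_cong) auto

lemma tmap_eq_map: "tmap f t = map (pure_map f) t"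
  unfolding tmap_def by (intro map_cong) auto

lemma tpair_Nil [simp]: "tpair \<phi> \<psi> [] = 0"
  by (simp add: tpair_def)

lemma tpair_Cons: "tpair \<phi> \<psi> (e # t) = pure_pair \<phi> \<psi> e + tpair \<phi> \<psi> t"
  by (simp add: tpair_eq_sum_list)

lemma tpair_append [simp]: "tpair \<phi> \<psi> (t1 @ t2) = tpair \<phi> \<psi> t1 + tpair \<phi> \<psi> t2"
  by (simp add: tpair_eq_sum_list)

lemma tpair_concat: "tpair \<phi> \<psi> (concat ts) = (\<Sum>t\<leftarrow>ts. tpair \<phi> \<psi> t)"
  by (induct ts) auto

lemma tpair_concat_upt: "tpair \<phi> \<psi> (concat (map f [0..<N])) = (\<Sum>k<N. tpair \<phi> \<psi> (f k))"
  by (simp add: tpair_concat interv_sum_list_conv_sum_set_nat atLeast0LessThan)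

lemma sum_list_tbr:
  "(\<Sum>g\<leftarrow>tbr br u v. h g) = (\<Sum>e\<leftarrow>u. \<Sum>f\<leftarrow>v. (h (pure_br br e f) :: 'b::comm_monoid_add))"
  unfolding tbr_eq_concat by (induct u) (auto simp: o_def)

lemma sum_list_tdiff:
  "(\<Sum>g\<leftarrow>tdiff dA dV u. h g) = (\<Sum>e\<leftarrow>u. (h (pure_dA dA e) + h (pure_dV dV e) :: 'b::comm_monoid_add))"
  unfolding tdiff_eq_concat by (induct u) (auto simp: algebra_simps)

lemma tpair_tbr: "tpair \<phi> \<psi> (tbr br t1 t2) = (\<Sum>e1\<leftarrow>t1. \<Sum>e2\<leftarrow>t2. pure_pair \<phi> \<psi> (pure_br br e1 e2))"
  by (simp add: tpair_eq_sum_list sum_list_tbr)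

lemma tpair_tdiff:
  "tpair \<phi> \<psi> (tdiff dA dV t) = (\<Sum>e\<leftarrow>t. pure_pair \<phi> \<psi> (pure_dA dA e) + pure_pair \<phi> \<psi> (pure_dV dV e))"
  by (simp add: tpair_eq_sum_list sum_list_tdiff)

lemma tpair_tneg: "lin_functional sa \<phi> \<Longrightarrow> tpair \<phi> \<psi> (tneg t) = - tpair \<phi> \<psi> t"
  by (induct t) (auto simp: tneg_def tpair_Cons lin_functional_neg)

lemma tpair_tscale: "lin_functional sa \<phi> \<Longrightarrow> tpair \<phi> \<psi> (tscale sa c t) = c * tpair \<phi> \<psi> t"
  by (induct t) (auto simp: tscale_def tpair_Cons lin_functional_scale algebra_simps)

lemma tpair_tmap: "tpair \<phi> \<psi> (tmap f t) = tpair \<phi> (\<lambda>x. \<psi> (f x)) t"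
  by (induct t) (auto simp: tmap_def tpair_Cons)

lemma tpair_diff_right: "tpair \<phi> (\<lambda>x. \<psi> x - c * \<chi> x) t = tpair \<phi> \<psi> t - c * tpair \<phi> \<chi> t"
  by (induct t) (auto simp: tpair_Cons algebra_simps)

lemma tpair_eq_0:
  assumes "\<And>i a j w. (i, a, j, w) \<in> set t \<Longrightarrow> w = 0" and \<psi>: "lin_functional sv \<psi>"
  shows "tpair \<phi> \<psi> t = 0"
  using assms(1)
proof (induct t)
  case (Cons e t)
  obtain i a j w where e: "e = (i, a, j, w)" by (cases e)
  have "w = 0" using Cons(2) e by auto
  moreover have "tpair \<phi> \<psi> t = 0" by (rule Cons(1)) (use Cons(2) in auto)
  ultimately show ?case using e by (simp add: tpair_Cons lin_functional_0[OF \<psi>])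
qed simp

lemma teq_iff_tpair:
  "vector_space sa \<Longrightarrow> vector_space sv \<Longrightarrow> teq sa sv t1 t2 \<longleftrightarrow>
     (\<forall>\<phi> \<psi>. lin_functional sa \<phi> \<longrightarrow> lin_functional sv \<psi> \<longrightarrow> tpair \<phi> \<psi> t1 = tpair \<phi> \<psi> t2)"
  unfolding teq_def by (simp add: linear_iff_lin_functional)

lemma tdiff_Nil [simp]: "tdiff dA dV [] = []"
  by (simp add: tdiff_def)

lemma tbr_Nil_left [simp]: "tbr br [] v = []"
  by (simp add: tbr_def)

lemma tbr_Nil_right [simp]: "tbr br u [] = []"
  by (simp add: tbr_eq_concat)

lemma tdiff_append [simp]: "tdiff dA dV (t1 @ t2) = tdiff dA dV t1 @ tdiff dA dV t2"
  by (simp add: tdiff_def)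

lemma tdiff_concat: "tdiff dA dV (concat ts) = concat (map (tdiff dA dV) ts)"
  by (induct ts) auto

lemma tbr_append_left [simp]: "tbr br (t1 @ t2) v = tbr br t1 v @ tbr br t2 v"
  by (simp add: tbr_def)

lemma tbr_concat_left: "tbr br (concat ts) v = concat (map (\<lambda>t. tbr br t v) ts)"
  by (induct ts) auto

lemma tpair_tbr_append_right [simp]:
  "tpair \<phi> \<psi> (tbr br u (t1 @ t2)) = tpair \<phi> \<psi> (tbr br u t1) + tpair \<phi> \<psi> (tbr br u t2)"
  by (simp add: tpair_tbr sum_list_addf)

lemma tpair_tbr_concat_right: "tpair \<phi> \<psi> (tbr br u (concat ts)) = (\<Sum>t\<leftarrow>ts. tpair \<phi> \<psi> (tbr br u t))"
  by (induct ts) auto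

lemma tmap_append [simp]: "tmap f (t1 @ t2) = tmap f t1 @ tmap f t2"
  by (simp add: tmap_def)

lemma tmap_concat: "tmap f (concat ts) = concat (map (tmap f) ts)"
  by (induct ts) (auto simp: tmap_def)

lemma tmap_tneg: "tmap f (tneg t) = tneg (tmap f t)"
proof -
  have comm: "pure_map f (pure_neg e) = pure_neg (pure_map f e)" for e by (cases e) simp
  show ?thesis by (simp add: tmap_eq_map tneg_eq_map comm)
qed

lemma tmap_tscale: "tmap f (tscale sa r t) = tscale sa r (tmap f t)"
proof -
  have comm: "pure_map f (pure_scale sa r e) = pure_scale sa r (pure_map f e)" for e by (cases e) simp
  show ?thesis by (simp add: tmap_eq_map tscale_eq_map comm)
qed

lemma sum_list_swap: "(\<Sum>x\<leftarrow>xs. \<Sum>y\<leftarrow>ys. f x y) = (\<Sum>y\<leftarrow>ys. \<Sum>x\<leftarrow>xs. (f x y :: 'b::comm_monoid_add))"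
  by (induct xs) (auto simp: sum_list_addf)

lemma sum_list_sum_swap: "(\<Sum>x\<leftarrow>xs. \<Sum>k\<in>K. f x k) = (\<Sum>k\<in>K. \<Sum>x\<leftarrow>xs. (f x k :: 'b::comm_monoid_add))"
  by (induct xs) (auto simp: sum.distrib)

lemma sum_list_map_cong: "(\<And>x. x \<in> set xs \<Longrightarrow> f x = g x) \<Longrightarrow> (\<Sum>x\<leftarrow>xs. f x) = (\<Sum>x\<leftarrow>xs. g x)"
  by (metis map_cong)

section \<open>The DGLA \<open>A\<^sup>+ \<otimes> V\<close> on formal tensors\<close>

locale tensor_dgla =
  fixes sa :: "rat \<Rightarrow> 'a::ring \<Rightarrow> 'a" and GA :: "int \<Rightarrow> 'a set" and dA :: "'a \<Rightarrow> 'a"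
    and s :: "rat \<Rightarrow> 'v::ab_group_add \<Rightarrow> 'v" and G :: "int \<Rightarrow> 'v set"
    and br :: "'v \<Rightarrow> 'v \<Rightarrow> 'v" and d :: "'v \<Rightarrow> 'v"
  assumes cdga: "cdga sa GA dA" and dgla: "dgla s G br d"
begin

lemma cdga_conjuncts:
  "graded_vs sa GA"
  "\<forall>r x y. sa r (x * y) = sa r x * y \<and> sa r (x * y) = x * sa r y"
  "\<forall>i j x y. x \<in> GA i \<longrightarrow> y \<in> GA j \<longrightarrow> x * y \<in> GA (i + j)"
  "\<forall>i j x y. x \<in> GA i \<longrightarrow> y \<in> GA j \<longrightarrow> x * y = gsign (i * j) (y * x)"
  "Vector_Spaces.linear sa sa dA"
  "\<forall>i x. x \<in> GA i \<longrightarrow> dA x \<in> GA (i + 1)"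
  "\<forall>x. dA (dA x) = 0"
  "\<forall>i x y. x \<in> GA i \<longrightarrow> dA (x * y) = dA x * y + gsign i (x * dA y)"
  by (insert cdga[unfolded cdga_def], (elim conjE, assumption)+)

lemmas graded_A = cdga_conjuncts(1)
  and mult_scale_left = cdga_conjuncts(2)[rule_format, THEN conjunct1]
  and mult_scale_right = cdga_conjuncts(2)[rule_format, THEN conjunct2]
  and mult_deg = cdga_conjuncts(3)[rule_format]
  and mult_comm = cdga_conjuncts(4)[rule_format]
  and linear_dA = cdga_conjuncts(5)
  and dA_deg = cdga_conjuncts(6)[rule_format]
  and dA_dA = cdga_conjuncts(7)[rule_format]
  and dA_mult = cdga_conjuncts(8)[rule_format]

lemma dgla_conjuncts:
  "graded_vs s G"
  "\<forall>x. Vector_Spaces.linear s s (br x)"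
  "\<forall>y. Vector_Spaces.linear s s (\<lambda>x. br x y)"
  "\<forall>i j x y. x \<in> G i \<longrightarrow> y \<in> G j \<longrightarrow> br x y \<in> G (i + j)"
  "\<forall>i j x y. x \<in> G i \<longrightarrow> y \<in> G j \<longrightarrow> br x y = - gsign (i * j) (br y x)"
  "\<forall>i j x y z. x \<in> G i \<longrightarrow> y \<in> G j \<longrightarrow>
     br x (br y z) = br (br x y) z + gsign (i * j) (br y (br x z))"
  "Vector_Spaces.linear s s d"
  "\<forall>i x. x \<in> G i \<longrightarrow> d x \<in> G (i + 1)"
  "\<forall>x. d (d x) = 0"
  "\<forall>i x y. x \<in> G i \<longrightarrow> d (br x y) = br (d x) y + gsign i (br x (d y))"
  by (insert dgla[unfolded dgla_def], (elim conjE, assumption)+)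

lemmas graded_V = dgla_conjuncts(1)
  and linear_br_right = dgla_conjuncts(2)[rule_format]
  and linear_br_left = dgla_conjuncts(3)[rule_format]
  and br_deg = dgla_conjuncts(4)[rule_format]
  and br_anticomm = dgla_conjuncts(5)[rule_format]
  and br_jacobi = dgla_conjuncts(6)[rule_format]
  and linear_d = dgla_conjuncts(7)
  and d_deg = dgla_conjuncts(8)[rule_format]
  and d_d = dgla_conjuncts(9)[rule_format]
  and d_br = dgla_conjuncts(10)[rule_format]

lemma vector_space_A: "vector_space sa"
  by (rule graded_vector_space[OF graded_A])

lemma vector_space_V: "vector_space s"
  by (rule graded_vector_space[OF graded_V])

lemma dA_add: "dA (x + y) = dA x + dA y"
  by (rule linear_add[OF linear_dA])

lemma dA_scale: "dA (sa r a) = sa r (dA a)"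
  by (rule linear_scale[OF linear_dA])

lemma dA_gsign: "dA (gsign k x) = gsign k (dA x)"
  by (rule linear_gsign[OF linear_dA])

lemma coh_class_add_coboundary:
  assumes b: "b \<in> GA (n - 1)"
  shows "coh_class GA dA n (c + dA b) = coh_class GA dA n c"
proof (intro set_eqI iffI)
  fix x assume "x \<in> coh_class GA dA n (c + dA b)"
  then obtain b' where "x = c + dA (b + b')" "b' \<in> GA (n - 1)"
    unfolding coh_class_def by (auto simp: dA_add add.assoc)
  then show "x \<in> coh_class GA dA n c"
    unfolding coh_class_def using graded_add[OF graded_A b] by blast
next
  fix x assume "x \<in> coh_class GA dA n c"
  then obtain b' where "x = c + dA b + dA (b' - b)" "b' \<in> GA (n - 1)"
    unfolding coh_class_def by (auto simp: linear_diff[OF linear_dA])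
  moreover have "b' - b \<in> GA (n - 1)" if "b' \<in> GA (n - 1)" for b'
    using graded_add[OF graded_A that graded_neg[OF graded_A b]] by simp
  ultimately show "x \<in> coh_class GA dA n (c + dA b)"
    unfolding coh_class_def by blast
qed

lemma br_gsign_right: "br x (gsign k y) = gsign k (br x y)"
  by (rule linear_gsign[OF linear_br_right])

lemma br_gsign_left: "br (gsign k x) y = gsign k (br x y)"
  using linear_gsign[OF linear_br_left] by blast

lemma br_neg_left: "br (- x) y = - br x y"
  using linear_neg[OF linear_br_left] by blast

lemma linear_mult_left: "Vector_Spaces.linear sa sa (\<lambda>x. a * x)"
  unfolding Vector_Spaces.linear_iff using vector_space_A by (auto simp: distrib_left mult_scale_right)

lemma linear_mult_right: "Vector_Spaces.linear sa sa (\<lambda>x. x * a)"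
  unfolding Vector_Spaces.linear_iff using vector_space_A by (auto simp: distrib_right mult_scale_left)

abbreviation wf :: "('a, 'v) tens \<Rightarrow> bool" where
  "wf \<equiv> tplus GA G"

abbreviation teq_V (infix \<open>\<approx>\<close> 50) where
  "t1 \<approx> t2 \<equiv> teq sa s t1 t2"

lemma teqI:
  "(\<And>\<phi> \<psi>. lin_functional sa \<phi> \<Longrightarrow> lin_functional s \<psi> \<Longrightarrow> tpair \<phi> \<psi> t1 = tpair \<phi> \<psi> t2) \<Longrightarrow> t1 \<approx> t2"
  using teq_iff_tpair[OF vector_space_A vector_space_V] by blast

lemma teqD: "t1 \<approx> t2 \<Longrightarrow> lin_functional sa \<phi> \<Longrightarrow> lin_functional s \<psi> \<Longrightarrow> tpair \<phi> \<psi> t1 = tpair \<phi> \<psi> t2"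
  using teq_iff_tpair[OF vector_space_A vector_space_V] by blast

lemma teq_refl: "t \<approx> t"
  by (rule teqI) simp

lemma teq_sym: "t1 \<approx> t2 \<Longrightarrow> t2 \<approx> t1"
  by (rule teqI) (metis teqD)

lemma teq_trans [trans]: "t1 \<approx> t2 \<Longrightarrow> t2 \<approx> t3 \<Longrightarrow> t1 \<approx> t3"
  by (rule teqI) (metis teqD)

lemma wf_iff: "wf t \<longleftrightarrow> (\<forall>i a j w. (i, a, j, w) \<in> set t \<longrightarrow> 0 < i \<and> a \<in> GA i \<and> w \<in> G j)"
  unfolding tplus_def by fastforce

lemma wf_mem: "wf t \<Longrightarrow> (i, a, j, w) \<in> set t \<Longrightarrow> 0 < i \<and> a \<in> GA i \<and> w \<in> G j"
  unfolding wf_iff by blast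

lemma tdeg_iff: "tdeg n t \<longleftrightarrow> (\<forall>i a j w. (i, a, j, w) \<in> set t \<longrightarrow> i + j = n)"
  unfolding tdeg_def by fastforce

lemma tdeg_mem: "tdeg n t \<Longrightarrow> (i, a, j, w) \<in> set t \<Longrightarrow> i + j = n"
  unfolding tdeg_iff by blast

lemma wf_Nil [simp]: "wf []"
  by (simp add: wf_iff)

lemma wf_append [simp]: "wf (t1 @ t2) \<longleftrightarrow> wf t1 \<and> wf t2"
  unfolding wf_iff by auto

lemma wf_concat: "(\<And>t. t \<in> set ts \<Longrightarrow> wf t) \<Longrightarrow> wf (concat ts)"
  unfolding wf_iff by auto

lemma wf_tneg: "wf t \<Longrightarrow> wf (tneg t)"
  unfolding wf_iff tneg_def by (auto simp: graded_neg[OF graded_A])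

lemma wf_tscale: "wf t \<Longrightarrow> wf (tscale sa c t)"
  unfolding wf_iff tscale_def by (auto simp: graded_scale[OF graded_A])

lemma wf_tbr: "wf t1 \<Longrightarrow> wf t2 \<Longrightarrow> wf (tbr br t1 t2)"
  unfolding wf_iff tbr_def by (clarsimp; meson add_pos_pos graded_gsign[OF graded_A] mult_deg br_deg)

lemma wf_tdiff: "wf t \<Longrightarrow> wf (tdiff dA d t)"
  unfolding wf_iff tdiff_def by (fastforce simp: graded_gsign[OF graded_A] dA_deg d_deg)

lemma wf_tF: "wf t \<Longrightarrow> wf (tF sa dA br d t)"
  by (simp add: tF_def wf_tdiff wf_tscale wf_tbr)

lemma wf_tbr_pow: "wf X \<Longrightarrow> wf t \<Longrightarrow> wf ((tbr br X ^^ n) t)"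
  by (induct n) (auto simp: wf_tbr)

lemma tdeg_append [simp]: "tdeg n (t1 @ t2) \<longleftrightarrow> tdeg n t1 \<and> tdeg n t2"
  unfolding tdeg_iff set_append by blast

lemma tdeg_concat: "(\<And>t. t \<in> set ts \<Longrightarrow> tdeg n t) \<Longrightarrow> tdeg n (concat ts)"
  unfolding tdeg_iff set_concat by blast

lemma tdeg_tneg: "tdeg n t \<Longrightarrow> tdeg n (tneg t)"
  unfolding tdeg_iff tneg_def by auto

lemma tdeg_tscale: "tdeg n t \<Longrightarrow> tdeg n (tscale sa c t)"
  unfolding tdeg_iff tscale_def by auto

lemma tdeg_tbr: "tdeg m t1 \<Longrightarrow> tdeg n t2 \<Longrightarrow> tdeg (m + n) (tbr br t1 t2)"
  unfolding tdeg_iff tbr_def by (clarsimp, metis add.assoc add.commute add.left_commute)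

lemma tdeg_tdiff: "tdeg n t \<Longrightarrow> tdeg (n + 1) (tdiff dA d t)"
  unfolding tdeg_iff tdiff_def by fastforce

lemma tdeg_tF: "tdeg 1 t \<Longrightarrow> tdeg 2 (tF sa dA br d t)"
  using tdeg_tdiff[of 1 t] tdeg_tbr[of 1 t 1 t] by (simp add: tF_def tdeg_tscale)

lemma tdeg_tbr_pow: "tdeg 0 X \<Longrightarrow> tdeg n t \<Longrightarrow> tdeg n ((tbr br X ^^ k) t)"
  using tdeg_tbr[of 0 X] by (induct k) auto

text \<open>Pairing \<open>[e\<^sub>1, t]\<close> with \<open>\<phi> \<otimes> \<psi>\<close> is pairing \<open>t\<close> with a functional obtained by contracting
  against the pure tensor \<open>e\<^sub>1\<close>, and similarly in the other slot; the parity involution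
  absorbs the Koszul sign, which depends on the degree of the other factor.\<close>

fun contractA_fst :: "('a \<Rightarrow> rat) \<Rightarrow> ('a, 'v) pure \<Rightarrow> 'a \<Rightarrow> rat" where
  "contractA_fst \<phi> (i1, a1, j1, w1) =
     (if even j1 then (\<lambda>a. \<phi> (a1 * a)) else (\<lambda>a. \<phi> (a1 * parity GA a)))"

fun contractV_fst :: "('v \<Rightarrow> rat) \<Rightarrow> ('a, 'v) pure \<Rightarrow> 'v \<Rightarrow> rat" where
  "contractV_fst \<psi> (i1, a1, j1, w1) = (\<lambda>w. \<psi> (br w1 w))"

fun contractA_snd :: "('a \<Rightarrow> rat) \<Rightarrow> ('a, 'v) pure \<Rightarrow> 'a \<Rightarrow> rat" where
  "contractA_snd \<phi> (i2, a2, j2, w2) = (\<lambda>a. \<phi> (a * a2))"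

fun contractV_snd :: "('v \<Rightarrow> rat) \<Rightarrow> ('a, 'v) pure \<Rightarrow> 'v \<Rightarrow> rat" where
  "contractV_snd \<psi> (i2, a2, j2, w2) =
     (if even i2 then (\<lambda>w. \<psi> (br w w2)) else (\<lambda>w. \<psi> (br (parity G w) w2)))"

lemma lin_functional_contractA_fst: "lin_functional sa \<phi> \<Longrightarrow> lin_functional sa (contractA_fst \<phi> e)"
  by (cases e) (simp add: lin_functional_comp[OF linear_mult_left]
      lin_functional_comp[OF linear_parity[OF graded_A] lin_functional_comp[OF linear_mult_left]])

lemma lin_functional_contractV_fst: "lin_functional s \<psi> \<Longrightarrow> lin_functional s (contractV_fst \<psi> e)"
  by (cases e) (simp add: lin_functional_comp[OF linear_br_right])

lemma lin_functional_contractA_snd: "lin_functional sa \<phi> \<Longrightarrow> lin_functional sa (contractA_snd \<phi> e)"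
  by (cases e) (simp add: lin_functional_comp[OF linear_mult_right])

lemma lin_functional_contractV_snd: "lin_functional s \<psi> \<Longrightarrow> lin_functional s (contractV_snd \<psi> e)"
  by (cases e) (simp add: lin_functional_comp[OF linear_br_left]
      lin_functional_comp[OF linear_parity[OF graded_V] lin_functional_comp[OF linear_br_left]])

lemma pure_pair_pure_br_contract_fst:
  assumes "lin_functional sa \<phi>" "a2 \<in> GA i2"
  shows "pure_pair \<phi> \<psi> (pure_br br e1 (i2, a2, j2, w2)) =
    pure_pair (contractA_fst \<phi> e1) (contractV_fst \<psi> e1) (i2, a2, j2, w2)"
  using assms by (cases e1) (auto simp: lin_functional_gsign parity_homog[OF graded_A]
      gsign_mult_right gsign_def)

lemma pure_pair_pure_br_contract_snd:
  assumes "lin_functional sa \<phi>" "lin_functional s \<psi>" "w1 \<in> G j1"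
  shows "pure_pair \<phi> \<psi> (pure_br br (i1, a1, j1, w1) e2) =
    pure_pair (contractA_snd \<phi> e2) (contractV_snd \<psi> e2) (i1, a1, j1, w1)"
  using assms by (cases e2) (auto simp: lin_functional_gsign parity_homog[OF graded_V]
      br_gsign_left gsign_def lin_functional_neg br_neg_left)

lemma tpair_tbr_contract_fst:
  assumes "wf t2" "lin_functional sa \<phi>"
  shows "tpair \<phi> \<psi> (tbr br t1 t2) = (\<Sum>e1\<leftarrow>t1. tpair (contractA_fst \<phi> e1) (contractV_fst \<psi> e1) t2)"
proof -
  have "pure_pair \<phi> \<psi> (pure_br br e1 e2) = pure_pair (contractA_fst \<phi> e1) (contractV_fst \<psi> e1) e2"
    if "e2 \<in> set t2" for e1 e2
  proof -
    obtain i2 a2 j2 w2 where "e2 = (i2, a2, j2, w2)" by (cases e2)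
    then show ?thesis
      using that wf_mem[OF assms(1)] pure_pair_pure_br_contract_fst[OF assms(2)] by blast
  qed
  then show ?thesis unfolding tpair_tbr by (simp add: tpair_eq_sum_list cong: map_cong)
qed

lemma tpair_tbr_contract_snd:
  assumes "wf t1" "lin_functional sa \<phi>" "lin_functional s \<psi>"
  shows "tpair \<phi> \<psi> (tbr br t1 t2) = (\<Sum>e2\<leftarrow>t2. tpair (contractA_snd \<phi> e2) (contractV_snd \<psi> e2) t1)"
proof -
  have "pure_pair \<phi> \<psi> (pure_br br e1 e2) = pure_pair (contractA_snd \<phi> e2) (contractV_snd \<psi> e2) e1"
    if "e1 \<in> set t1" for e1 e2
  proof -
    obtain i1 a1 j1 w1 where "e1 = (i1, a1, j1, w1)" by (cases e1)
    then show ?thesis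
      using that wf_mem[OF assms(1)] pure_pair_pure_br_contract_snd[OF assms(2,3)] by blast
  qed
  then have "tpair \<phi> \<psi> (tbr br t1 t2) =
      (\<Sum>e1\<leftarrow>t1. \<Sum>e2\<leftarrow>t2. pure_pair (contractA_snd \<phi> e2) (contractV_snd \<psi> e2) e1)"
    unfolding tpair_tbr by (simp cong: map_cong)
  then show ?thesis by (simp add: sum_list_swap[of _ t1] tpair_eq_sum_list)
qed

lemma tpair_tdiff_split:
  assumes "wf t"
  shows "tpair \<phi> \<psi> (tdiff dA d t) =
    tpair (\<lambda>a. \<phi> (dA a)) \<psi> t + tpair (\<lambda>a. \<phi> (parity GA a)) (\<lambda>w. \<psi> (d w)) t"
proof -
  have "pure_pair \<phi> \<psi> (pure_dA dA e) + pure_pair \<phi> \<psi> (pure_dV d e) =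
      pure_pair (\<lambda>a. \<phi> (dA a)) \<psi> e + pure_pair (\<lambda>a. \<phi> (parity GA a)) (\<lambda>w. \<psi> (d w)) e"
    if "e \<in> set t" for e
  proof -
    obtain i a j w where e: "e = (i, a, j, w)" by (cases e)
    then have "a \<in> GA i" using that wf_mem[OF assms] by blast
    then show ?thesis using e by (simp add: parity_homog[OF graded_A])
  qed
  then show ?thesis unfolding tpair_tdiff by (simp add: tpair_eq_sum_list sum_list_addf[symmetric] cong: map_cong)
qed

lemma teq_tbr_left: "wf t1 \<Longrightarrow> wf t1' \<Longrightarrow> t1 \<approx> t1' \<Longrightarrow> tbr br t1 t2 \<approx> tbr br t1' t2"
  by (rule teqI) (simp add: tpair_tbr_contract_snd teqD lin_functional_contractA_snd
      lin_functional_contractV_snd)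

lemma teq_tbr_right: "wf t2 \<Longrightarrow> wf t2' \<Longrightarrow> t2 \<approx> t2' \<Longrightarrow> tbr br t1 t2 \<approx> tbr br t1 t2'"
  by (rule teqI) (simp add: tpair_tbr_contract_fst teqD lin_functional_contractA_fst
      lin_functional_contractV_fst)

lemma teq_tbr:
  "wf t1 \<Longrightarrow> wf t1' \<Longrightarrow> wf t2 \<Longrightarrow> wf t2' \<Longrightarrow> t1 \<approx> t1' \<Longrightarrow> t2 \<approx> t2' \<Longrightarrow> tbr br t1 t2 \<approx> tbr br t1' t2'"
  by (meson teq_tbr_left teq_tbr_right teq_trans)

lemma teq_tdiff: "wf t \<Longrightarrow> wf t' \<Longrightarrow> t \<approx> t' \<Longrightarrow> tdiff dA d t \<approx> tdiff dA d t'"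
  by (rule teqI) (simp add: tpair_tdiff_split teqD lin_functional_comp[OF linear_dA]
      lin_functional_comp[OF linear_parity[OF graded_A]] lin_functional_comp[OF linear_d])

lemma teq_append: "t1 \<approx> t1' \<Longrightarrow> t2 \<approx> t2' \<Longrightarrow> t1 @ t2 \<approx> t1' @ t2'"
  by (rule teqI) (simp add: teqD)

lemma teq_tneg: "t \<approx> t' \<Longrightarrow> tneg t \<approx> tneg t'"
  by (rule teqI) (simp add: teqD tpair_tneg)

lemma teq_tscale: "t \<approx> t' \<Longrightarrow> tscale sa c t \<approx> tscale sa c t'"
  by (rule teqI) (simp add: teqD tpair_tscale)

lemma teq_tF: "wf u \<Longrightarrow> wf u' \<Longrightarrow> u \<approx> u' \<Longrightarrow> tF sa dA br d u \<approx> tF sa dA br d u'"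
  unfolding tF_def by (intro teq_append teq_tdiff teq_tscale teq_tbr)

end

context tensor_dgla
begin

lemma pure_jacobi_deg0:
  assumes l: "lin_functional sa \<phi>" "lin_functional s \<psi>"
    and x: "i1 + j1 = 0" "a1 \<in> GA i1" "w1 \<in> G j1"
    and e: "a2 \<in> GA i2" "w2 \<in> G j2"
  shows "pure_pair \<phi> \<psi> (pure_br br (i1,a1,j1,w1) (pure_br br (i2,a2,j2,w2) (i3,a3,j3,w3))) =
    pure_pair \<phi> \<psi> (pure_br br (pure_br br (i1,a1,j1,w1) (i2,a2,j2,w2)) (i3,a3,j3,w3)) +
    pure_pair \<phi> \<psi> (pure_br br (i2,a2,j2,w2) (pure_br br (i1,a1,j1,w1) (i3,a3,j3,w3)))"
proof -
  have comm: "a2 * (a1 * a3) = gsign (i2 * i1) (a1 * a2 * a3)"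
    by (simp add: mult.assoc[symmetric] mult_comm[OF e(1) x(2)] gsign_mult_left)
  have jacobi: "br w1 (br w2 w3) = br (br w1 w2) w3 + gsign (j1 * j2) (br w2 (br w1 w3))"
    by (rule br_jacobi[OF x(3) e(2)])
  have j1: "j1 = - i1" using x(1) by simp
  show ?thesis
    apply (simp add: gsign_mult_left gsign_mult_right lin_functional_gsign[OF l(1)]
        lin_functional_gsign[OF l(2)] comm jacobi lin_functional_add[OF l(2)] gsign_rat mult.assoc)
    apply (simp add: j1 sgn_int_def)
    apply (cases "even i1"; cases "even i2"; cases "even i3"; cases "even j2"; cases "even j3")
            apply (simp_all add: algebra_simps)
    done
qed

lemma pure_leibniz_deg0:
  assumes l: "lin_functional sa \<phi>" "lin_functional s \<psi>"
    and x: "i1 + j1 = 0" "a1 \<in> GA i1" "w1 \<in> G j1"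
  shows "pure_pair \<phi> \<psi> (pure_dA dA (pure_br br (i1,a1,j1,w1) (i2,a2,j2,w2))) +
      pure_pair \<phi> \<psi> (pure_dV d (pure_br br (i1,a1,j1,w1) (i2,a2,j2,w2))) =
    (pure_pair \<phi> \<psi> (pure_br br (pure_dA dA (i1,a1,j1,w1)) (i2,a2,j2,w2)) +
      pure_pair \<phi> \<psi> (pure_br br (pure_dV d (i1,a1,j1,w1)) (i2,a2,j2,w2))) +
    (pure_pair \<phi> \<psi> (pure_br br (i1,a1,j1,w1) (pure_dA dA (i2,a2,j2,w2))) +
      pure_pair \<phi> \<psi> (pure_br br (i1,a1,j1,w1) (pure_dV d (i2,a2,j2,w2))))"
proof -
  have j1: "j1 = - i1" using x(1) by simp
  show ?thesis
    apply (simp add: gsign_mult_left gsign_mult_right lin_functional_gsign[OF l(1)]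
        lin_functional_gsign[OF l(2)] dA_gsign dA_mult[OF x(2)] d_br[OF x(3)]
        lin_functional_add[OF l(1)] lin_functional_add[OF l(2)] gsign_rat br_gsign_right
        br_gsign_left mult.assoc)
    apply (simp add: j1 sgn_int_def)
    apply (cases "even i1"; cases "even i2")
       apply (simp_all add: algebra_simps)
    done
qed

lemma pure_anticomm:
  assumes l: "lin_functional sa \<phi>" "lin_functional s \<psi>"
    and e: "a1 \<in> GA i1" "w1 \<in> G j1" and f: "a2 \<in> GA i2" "w2 \<in> G j2"
  shows "pure_pair \<phi> \<psi> (pure_br br (i1,a1,j1,w1) (i2,a2,j2,w2)) =
    - sgn_int ((i1 + j1) * (i2 + j2)) * pure_pair \<phi> \<psi> (pure_br br (i2,a2,j2,w2) (i1,a1,j1,w1))"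
  by (simp add: mult_comm[OF f(1) e(1)] br_anticomm[OF f(2) e(2)] lin_functional_gsign[OF l(1)]
      lin_functional_gsign[OF l(2)] lin_functional_neg[OF l(2)] gsign_rat)
    (simp add: sgn_int_def)

lemma tbr_deg0_derivation:
  assumes X: "wf X" "tdeg 0 X" and u: "wf u"
  shows "tbr br X (tbr br u v) \<approx> tbr br (tbr br X u) v @ tbr br u (tbr br X v)"
proof (rule teqI)
  fix \<phi> \<psi> assume l: "lin_functional sa \<phi>" "lin_functional s \<psi>"
  let ?P = "pure_pair \<phi> \<psi>" and ?B = "pure_br br"
  have "(\<Sum>x\<leftarrow>X. \<Sum>e\<leftarrow>u. \<Sum>f\<leftarrow>v. ?P (?B x (?B e f))) =
     (\<Sum>x\<leftarrow>X. \<Sum>e\<leftarrow>u. \<Sum>f\<leftarrow>v. ?P (?B (?B x e) f) + ?P (?B e (?B x f)))"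
  proof (intro sum_list_map_cong)
    fix x e f :: "('a, 'v) pure" assume xe: "x \<in> set X" "e \<in> set u"
    obtain i1 a1 j1 w1 where x: "x = (i1, a1, j1, w1)" by (cases x)
    obtain i2 a2 j2 w2 where e: "e = (i2, a2, j2, w2)" by (cases e)
    obtain i3 a3 j3 w3 where f: "f = (i3, a3, j3, w3)" by (cases f)
    have "i1 + j1 = 0" "a1 \<in> GA i1" "w1 \<in> G j1"
      using wf_mem[OF X(1)] tdeg_mem[OF X(2)] xe x by blast+
    moreover have "a2 \<in> GA i2" "w2 \<in> G j2" using wf_mem[OF u] xe e by blast+
    ultimately show "?P (?B x (?B e f)) = ?P (?B (?B x e) f) + ?P (?B e (?B x f))"
      unfolding x e f by (rule pure_jacobi_deg0[OF l])
  qed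
  then show "tpair \<phi> \<psi> (tbr br X (tbr br u v)) = tpair \<phi> \<psi> (tbr br (tbr br X u) v @ tbr br u (tbr br X v))"
    by (simp add: tpair_tbr sum_list_tbr sum_list_swap[of _ u] sum_list_addf)
qed

lemma tdiff_tbr_deg0:
  assumes X: "wf X" "tdeg 0 X"
  shows "tdiff dA d (tbr br X u) \<approx> tbr br (tdiff dA d X) u @ tbr br X (tdiff dA d u)"
proof (rule teqI)
  fix \<phi> \<psi> assume l: "lin_functional sa \<phi>" "lin_functional s \<psi>"
  let ?P = "pure_pair \<phi> \<psi>" and ?B = "pure_br br" and ?DA = "pure_dA dA" and ?DV = "pure_dV d"
  have "(\<Sum>x\<leftarrow>X. \<Sum>e\<leftarrow>u. ?P (?DA (?B x e)) + ?P (?DV (?B x e))) =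
     (\<Sum>x\<leftarrow>X. \<Sum>e\<leftarrow>u. (?P (?B (?DA x) e) + ?P (?B (?DV x) e)) + (?P (?B x (?DA e)) + ?P (?B x (?DV e))))"
  proof (intro sum_list_map_cong)
    fix x e :: "('a, 'v) pure" assume "x \<in> set X"
    obtain i1 a1 j1 w1 where x: "x = (i1, a1, j1, w1)" by (cases x)
    obtain i2 a2 j2 w2 where e: "e = (i2, a2, j2, w2)" by (cases e)
    have "i1 + j1 = 0" "a1 \<in> GA i1" "w1 \<in> G j1"
      using wf_mem[OF X(1)] tdeg_mem[OF X(2)] \<open>x \<in> set X\<close> x by blast+
    then show "?P (?DA (?B x e)) + ?P (?DV (?B x e)) =
        (?P (?B (?DA x) e) + ?P (?B (?DV x) e)) + (?P (?B x (?DA e)) + ?P (?B x (?DV e)))"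
      unfolding x e by (rule pure_leibniz_deg0[OF l])
  qed
  then show "tpair \<phi> \<psi> (tdiff dA d (tbr br X u)) =
      tpair \<phi> \<psi> (tbr br (tdiff dA d X) u @ tbr br X (tdiff dA d u))"
    by (simp add: tpair_eq_sum_list sum_list_tdiff sum_list_tbr sum_list_addf)
qed

lemma tdiff_tdiff: "tdiff dA d (tdiff dA d t) \<approx> []"
proof (rule teqI)
  fix \<phi> \<psi> assume l: "lin_functional sa \<phi>" "lin_functional s \<psi>"
  have "pure_pair \<phi> \<psi> (pure_dA dA (pure_dA dA e)) + pure_pair \<phi> \<psi> (pure_dV d (pure_dA dA e)) +
      (pure_pair \<phi> \<psi> (pure_dA dA (pure_dV d e)) + pure_pair \<phi> \<psi> (pure_dV d (pure_dV d e))) = 0" for e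
    by (cases e) (simp add: dA_dA d_d lin_functional_0[OF l(1)] lin_functional_0[OF l(2)] dA_gsign
        lin_functional_gsign[OF l(1)] gsign_rat sgn_int_def)
  then show "tpair \<phi> \<psi> (tdiff dA d (tdiff dA d t)) = tpair \<phi> \<psi> []"
    by (simp add: tpair_eq_sum_list sum_list_tdiff)
qed

lemma tpair_tbr_swap:
  assumes u: "wf u" "tdeg m u" and v: "wf v" "tdeg n v"
    and l: "lin_functional sa \<phi>" "lin_functional s \<psi>"
  shows "tpair \<phi> \<psi> (tbr br u v) = - sgn_int (m * n) * tpair \<phi> \<psi> (tbr br v u)"
proof -
  have "pure_pair \<phi> \<psi> (pure_br br e f) = - sgn_int (m * n) * pure_pair \<phi> \<psi> (pure_br br f e)"
    if ef: "e \<in> set u" "f \<in> set v" for e f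
  proof -
    obtain i1 a1 j1 w1 where e: "e = (i1, a1, j1, w1)" by (cases e)
    obtain i2 a2 j2 w2 where f: "f = (i2, a2, j2, w2)" by (cases f)
    have 1: "a1 \<in> GA i1" "w1 \<in> G j1" "i1 + j1 = m"
      using wf_mem[OF u(1)] tdeg_mem[OF u(2)] ef e by blast+
    have 2: "a2 \<in> GA i2" "w2 \<in> G j2" "i2 + j2 = n"
      using wf_mem[OF v(1)] tdeg_mem[OF v(2)] ef f by blast+
    show ?thesis using pure_anticomm[OF l 1(1,2) 2(1,2)] 1(3) 2(3) e f by simp
  qed
  then have "tpair \<phi> \<psi> (tbr br u v) =
      (\<Sum>e\<leftarrow>u. \<Sum>f\<leftarrow>v. - sgn_int (m * n) * pure_pair \<phi> \<psi> (pure_br br f e))"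
    unfolding tpair_tbr by (simp cong: map_cong)
  also have "\<dots> = - sgn_int (m * n) * tpair \<phi> \<psi> (tbr br v u)"
    by (simp add: tpair_tbr sum_list_swap[of _ u] sum_list_const_mult[symmetric])
  finally show ?thesis .
qed

lemma tbr_anticomm_deg0: "wf X \<Longrightarrow> tdeg 0 X \<Longrightarrow> wf v \<Longrightarrow> tdeg n v \<Longrightarrow> tbr br X v \<approx> tneg (tbr br v X)"
  by (rule teqI) (simp add: tpair_tbr_swap[of X 0 v n] tpair_tneg sgn_int_def)

lemma tbr_comm_deg1: "wf u \<Longrightarrow> tdeg 1 u \<Longrightarrow> wf v \<Longrightarrow> tdeg 1 v \<Longrightarrow> tbr br u v \<approx> tbr br v u"
  by (rule teqI) (simp add: tpair_tbr_swap[of u 1 v 1] sgn_int_def)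

lemma tpair_tbr_tscale_right:
  "lin_functional sa \<phi> \<Longrightarrow> tpair \<phi> \<psi> (tbr br u (tscale sa r t)) = r * tpair \<phi> \<psi> (tbr br u t)"
  unfolding tpair_tbr tscale_eq_map
  by (induct u) (auto simp: sum_list_const_mult[symmetric] o_def algebra_simps intro!: sum_list_map_cong
      split: prod.splits simp: mult_scale_right[symmetric] lin_functional_gsign lin_functional_scale gsign_rat)

lemma tpair_tbr_tscale_left:
  "lin_functional sa \<phi> \<Longrightarrow> tpair \<phi> \<psi> (tbr br (tscale sa r t) u) = r * tpair \<phi> \<psi> (tbr br t u)"
  unfolding tpair_tbr tscale_eq_map
  by (induct t) (auto simp: sum_list_const_mult[symmetric] o_def algebra_simps intro!: sum_list_map_cong
      split: prod.splits simp: mult_scale_left[symmetric] lin_functional_gsign lin_functional_scale gsign_rat)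

lemma tpair_tbr_tneg_right: "lin_functional sa \<phi> \<Longrightarrow> tpair \<phi> \<psi> (tbr br u (tneg t)) = - tpair \<phi> \<psi> (tbr br u t)"
proof -
  assume l: "lin_functional sa \<phi>"
  have "pure_pair \<phi> \<psi> (pure_br br e1 (pure_neg e2)) = - pure_pair \<phi> \<psi> (pure_br br e1 e2)" for e1 e2
    by (cases e1; cases e2) (simp add: lin_functional_gsign[OF l] lin_functional_neg[OF l] gsign_rat)
  then show ?thesis by (simp add: tpair_tbr tneg_eq_map o_def uminus_sum_list_map)
qed

lemma tpair_tbr_tneg_left: "lin_functional sa \<phi> \<Longrightarrow> tpair \<phi> \<psi> (tbr br (tneg t) u) = - tpair \<phi> \<psi> (tbr br t u)"
proof -
  assume l: "lin_functional sa \<phi>"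
  have "pure_pair \<phi> \<psi> (pure_br br (pure_neg e1) e2) = - pure_pair \<phi> \<psi> (pure_br br e1 e2)" for e1 e2
    by (cases e1; cases e2) (simp add: lin_functional_gsign[OF l] lin_functional_neg[OF l] gsign_rat)
  then show ?thesis by (simp add: tpair_tbr tneg_eq_map o_def uminus_sum_list_map)
qed

lemma tpair_tdiff_tscale:
  "lin_functional sa \<phi> \<Longrightarrow> tpair \<phi> \<psi> (tdiff dA d (tscale sa r t)) = r * tpair \<phi> \<psi> (tdiff dA d t)"
  unfolding tpair_tdiff tscale_eq_map
  by (induct t) (auto simp: dA_scale gsign_scale[OF graded_A] lin_functional_scale algebra_simps)

lemma tpair_tdiff_tneg:
  "lin_functional sa \<phi> \<Longrightarrow> tpair \<phi> \<psi> (tdiff dA d (tneg t)) = - tpair \<phi> \<psi> (tdiff dA d t)"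
  unfolding tpair_tdiff tneg_eq_map
  by (induct t) (auto simp: linear_neg[OF linear_dA] gsign_neg lin_functional_neg algebra_simps)

end

section \<open>The exponential of \<open>ad X\<close> on the extended DGLA\<close>

lemma binomial_sum_pascal:
  "(\<Sum>k\<le>n. of_nat (n choose k) * (f (Suc k) (n - k) + f k (Suc n - k))) =
   (\<Sum>k\<le>Suc n. of_nat (Suc n choose k) * (f k (Suc n - k) :: 'b::comm_semiring_1))"
proof -
  have rhs: "(\<Sum>k\<le>Suc n. of_nat (Suc n choose k) * f k (Suc n - k)) =
     f 0 (Suc n) + (\<Sum>k\<le>n. of_nat (n choose k) * f (Suc k) (n - k)) +
       (\<Sum>k\<le>n. of_nat (n choose Suc k) * f (Suc k) (n - k))"
    by (subst sum.atMost_Suc_shift) (simp add: algebra_simps sum.distrib)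
  have shift: "(\<Sum>k\<le>n. of_nat (n choose k) * f k (Suc n - k)) =
     f 0 (Suc n) + (\<Sum>k<n. of_nat (n choose Suc k) * f (Suc k) (n - k))"
  proof (cases n)
    case (Suc m)
    then show ?thesis by (simp only: sum.atMost_Suc_shift lessThan_Suc_atMost) simp
  qed simp
  have drop_last: "(\<Sum>k\<le>n. of_nat (n choose Suc k) * f (Suc k) (n - k)) =
     (\<Sum>k<n. of_nat (n choose Suc k) * f (Suc k) (n - k))"
    by (simp add: lessThan_Suc_atMost[symmetric] binomial_eq_0)
  show ?thesis
    unfolding rhs by (simp only: distrib_left sum.distrib shift drop_last add.assoc add.commute add.left_commute)
qed

context tensor_dgla
begin

text \<open>A pair \<open>(r, t)\<close> encodes \<open>r \<delta> + t\<close>, where \<open>[\<delta>, x] = d x\<close> and \<open>[\<delta>, \<delta>] = 0\<close>; \<open>ext_ad X\<close> and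
  \<open>ext_br\<close> are \<open>ad X\<close> and the bracket in these coordinates (the bracket has no \<open>\<delta>\<close>-component).\<close>

fun ext_ad :: "('a, 'v) tens \<Rightarrow> rat \<times> ('a, 'v) tens \<Rightarrow> rat \<times> ('a, 'v) tens" where
  "ext_ad X (r, t) = (0, tneg (tscale sa r (tdiff dA d X)) @ tbr br X t)"

fun ext_br :: "rat \<times> ('a, 'v) tens \<Rightarrow> rat \<times> ('a, 'v) tens \<Rightarrow> ('a, 'v) tens" where
  "ext_br (r1, t1) (r2, t2) = tscale sa r1 (tdiff dA d t2) @ tscale sa r2 (tdiff dA d t1) @ tbr br t1 t2"

definition ext_wf :: "rat \<times> ('a, 'v) tens \<Rightarrow> bool" where
  "ext_wf p \<longleftrightarrow> wf (snd p) \<and> tdeg 1 (snd p)"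

lemma fst_ext_ad [simp]: "fst (ext_ad X p) = 0"
  by (cases p) simp

lemma ext_wf_ext_ad: "wf X \<Longrightarrow> tdeg 0 X \<Longrightarrow> ext_wf p \<Longrightarrow> ext_wf (ext_ad X p)"
  using tdeg_tdiff[of 0 X] tdeg_tbr[of 0 X 1 "snd p"]
  by (cases p) (auto simp: ext_wf_def wf_tneg wf_tscale wf_tdiff wf_tbr tdeg_tneg tdeg_tscale)

lemma ext_wf_ext_ad_pow: "wf X \<Longrightarrow> tdeg 0 X \<Longrightarrow> ext_wf p \<Longrightarrow> ext_wf ((ext_ad X ^^ k) p)"
  by (induct k) (auto simp: ext_wf_ext_ad)

lemma wf_ext_br: "ext_wf p \<Longrightarrow> ext_wf q \<Longrightarrow> wf (ext_br p q)"
  by (cases p; cases q) (auto simp: ext_wf_def wf_tscale wf_tdiff wf_tbr)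

lemma tpair_ext_br: "lin_functional sa \<phi> \<Longrightarrow> tpair \<phi> \<psi> (ext_br (r1, t1) (r2, t2)) =
    r1 * tpair \<phi> \<psi> (tdiff dA d t2) + r2 * tpair \<phi> \<psi> (tdiff dA d t1) + tpair \<phi> \<psi> (tbr br t1 t2)"
  by (simp add: tpair_tscale)

lemma ext_br_eq_tF: "ext_br (1, u) (1, u) \<approx> tscale sa 2 (tF sa dA br d u)"
  by (rule teqI) (simp add: tF_def tpair_tscale)

lemma snd_ext_ad_0: "snd (ext_ad X (0, t)) \<approx> tbr br X t"
  by (rule teqI) (simp add: tpair_tneg tpair_tscale)

lemma tbr_ext_br:
  assumes X: "wf X" "tdeg 0 X" and p: "ext_wf p" and q: "ext_wf q"
  shows "tbr br X (ext_br p q) \<approx> ext_br (ext_ad X p) q @ ext_br p (ext_ad X q)"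
proof (rule teqI)
  fix \<phi> \<psi> assume l: "lin_functional sa \<phi>" "lin_functional s \<psi>"
  obtain r1 t1 where p1: "p = (r1, t1)" by (cases p)
  obtain r2 t2 where q2: "q = (r2, t2)" by (cases q)
  have t1: "wf t1" "tdeg 1 t1" and t2: "wf t2" "tdeg 1 t2"
    using p q p1 q2 by (auto simp: ext_wf_def)
  define Y where "Y = tdiff dA d X"
  have Y: "wf Y" "tdeg 1 Y" using X tdeg_tdiff[OF X(2)] by (auto simp: Y_def wf_tdiff)
  let ?P = "\<lambda>u v. tpair \<phi> \<psi> (tbr br u v)" and ?D = "\<lambda>u. tpair \<phi> \<psi> (tdiff dA d u)"
  have "tpair \<phi> \<psi> (tbr br X (ext_br p q)) =
      r1 * ?P X (tdiff dA d t2) + r2 * ?P X (tdiff dA d t1) + ?P X (tbr br t1 t2)"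
    by (simp add: p1 q2 tpair_tbr_tscale_right l)
  moreover have "tpair \<phi> \<psi> (ext_br (ext_ad X p) q) =
      r2 * (- r1 * ?D Y + ?D (tbr br X t1)) + (- r1 * ?P Y t2 + ?P (tbr br X t1) t2)"
    by (simp add: p1 q2 l tpair_tscale tpair_tdiff_tscale tpair_tdiff_tneg tpair_tbr_tneg_left
        tpair_tbr_tscale_left Y_def)
  moreover have "tpair \<phi> \<psi> (ext_br p (ext_ad X q)) =
      r1 * (- r2 * ?D Y + ?D (tbr br X t2)) + (- r2 * ?P t1 Y + ?P t1 (tbr br X t2))"
    by (simp add: p1 q2 l tpair_tscale tpair_tdiff_tscale tpair_tdiff_tneg tpair_tbr_tneg_right
        tpair_tbr_tscale_right Y_def)
  moreover have "?D Y = 0"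
    using teqD[OF tdiff_tdiff l] by (simp add: Y_def)
  moreover have "?D (tbr br X t) = ?P Y t + ?P X (tdiff dA d t)" for t
    using teqD[OF tdiff_tbr_deg0[OF X] l] by (simp add: Y_def)
  moreover have "?P t1 Y = ?P Y t1"
    using teqD[OF tbr_comm_deg1[OF t1 Y] l] .
  moreover have "?P X (tbr br t1 t2) = ?P (tbr br X t1) t2 + ?P t1 (tbr br X t2)"
    using teqD[OF tbr_deg0_derivation[OF X t1(1)] l] by simp
  ultimately show "tpair \<phi> \<psi> (tbr br X (ext_br p q)) =
      tpair \<phi> \<psi> (ext_br (ext_ad X p) q @ ext_br p (ext_ad X q))"
    by (simp add: algebra_simps)
qed

lemma tpair_tbr_pow_ext_br:
  assumes X: "wf X" "tdeg 0 X" and p: "ext_wf p" and q: "ext_wf q"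
    and l: "lin_functional sa \<phi>" "lin_functional s \<psi>"
  shows "tpair \<phi> \<psi> ((tbr br X ^^ n) (ext_br p q)) =
     (\<Sum>k\<le>n. of_nat (n choose k) * tpair \<phi> \<psi> (ext_br ((ext_ad X ^^ k) p) ((ext_ad X ^^ (n - k)) q)))"
  using l
proof (induct n arbitrary: \<phi> \<psi>)
  case (Suc n)
  let ?E = "\<lambda>k p. (ext_ad X ^^ k) p"
  let ?B = "\<lambda>\<phi> \<psi> k m. tpair \<phi> \<psi> (ext_br (?E k p) (?E m q))"
  have wf_pow: "wf ((tbr br X ^^ n) (ext_br p q))"
    by (rule wf_tbr_pow[OF X(1) wf_ext_br[OF p q]])
  have wf_B: "wf (ext_br (?E k p) (?E m q))" for k m
    by (intro wf_ext_br ext_wf_ext_ad_pow X p q)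
  have "tpair \<phi> \<psi> ((tbr br X ^^ Suc n) (ext_br p q)) =
      (\<Sum>x\<leftarrow>X. tpair (contractA_fst \<phi> x) (contractV_fst \<psi> x) ((tbr br X ^^ n) (ext_br p q)))"
    using tpair_tbr_contract_fst[OF wf_pow Suc.prems(1)] by simp
  also have "\<dots> = (\<Sum>k\<le>n. of_nat (n choose k) *
      (\<Sum>x\<leftarrow>X. ?B (contractA_fst \<phi> x) (contractV_fst \<psi> x) k (n - k)))"
    using Suc lin_functional_contractA_fst lin_functional_contractV_fst
    by (simp add: sum_list_sum_swap sum_list_const_mult)
  also have "\<dots> = (\<Sum>k\<le>n. of_nat (n choose k) * tpair \<phi> \<psi> (tbr br X (ext_br (?E k p) (?E (n - k) q))))"
    by (simp add: tpair_tbr_contract_fst[OF wf_B Suc.prems(1)])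
  also have "\<dots> = (\<Sum>k\<le>n. of_nat (n choose k) * (?B \<phi> \<psi> (Suc k) (n - k) + ?B \<phi> \<psi> k (Suc n - k)))"
  proof (intro sum.cong refl)
    fix k assume "k \<in> {..n}"
    then have "Suc n - k = Suc (n - k)" by auto
    moreover have "tbr br X (ext_br (?E k p) (?E (n - k) q)) \<approx>
        ext_br (ext_ad X (?E k p)) (?E (n - k) q) @ ext_br (?E k p) (ext_ad X (?E (n - k) q))"
      by (intro tbr_ext_br X ext_wf_ext_ad_pow p q)
    ultimately show "of_nat (n choose k) * tpair \<phi> \<psi> (tbr br X (ext_br (?E k p) (?E (n - k) q))) =
        of_nat (n choose k) * (?B \<phi> \<psi> (Suc k) (n - k) + ?B \<phi> \<psi> k (Suc n - k))"
      using teqD[OF _ Suc.prems] by simp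
  qed
  also have "\<dots> = (\<Sum>k\<le>Suc n. of_nat (Suc n choose k) * ?B \<phi> \<psi> k (Suc n - k))"
    by (rule binomial_sum_pascal)
  finally show ?case .
qed simp

end

section \<open>Nilpotency\<close>

context tensor_dgla
begin

lemma tbr_pow_mem_lcs: "(i, a, j, w) \<in> set ((tbr br X ^^ k) t) \<Longrightarrow> w \<in> lcs s br k"
proof (induct k arbitrary: i a j w)
  case (Suc k)
  from Suc(2) have "(i, a, j, w) \<in> set (tbr br X ((tbr br X ^^ k) t))" by simp
  then obtain x f where xf: "x \<in> set X" "f \<in> set ((tbr br X ^^ k) t)" "(i, a, j, w) = pure_br br x f"
    using set_tbr by blast
  obtain i1 a1 j1 w1 where x: "x = (i1, a1, j1, w1)" by (cases x)
  obtain i2 a2 j2 w2 where f: "f = (i2, a2, j2, w2)" by (cases f)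
  have "w2 \<in> lcs s br k" using Suc(1) xf(2) f by blast
  then have "w \<in> {br x y | x y. y \<in> lcs s br k}" using xf(3) x f by auto
  then show ?case
    using module.span_base[OF vector_space_V[unfolded module_iff_vector_space[symmetric]]] by simp
qed simp

lemma tpair_tbr_pow_nilpotent:
  assumes N: "lcs s br N = {0}" and k: "N \<le> k" and \<psi>: "lin_functional s \<psi>"
  shows "tpair \<phi> \<psi> ((tbr br X ^^ k) t) = 0"
proof -
  have "(tbr br X ^^ k) t = (tbr br X ^^ N) ((tbr br X ^^ (k - N)) t)"
    using k by (metis funpow_add le_add_diff_inverse o_apply)
  then show ?thesis
    using tbr_pow_mem_lcs[where k=N] N by (intro tpair_eq_0[OF _ \<psi>]) auto
qed

lemma teq_tbr_pow: "wf X \<Longrightarrow> wf t \<Longrightarrow> wf t' \<Longrightarrow> t \<approx> t' \<Longrightarrow> (tbr br X ^^ n) t \<approx> (tbr br X ^^ n) t'"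
  by (induct n) (auto intro: teq_tbr_right wf_tbr_pow)

lemma tbr_pow_tscale: "wf X \<Longrightarrow> wf t \<Longrightarrow> (tbr br X ^^ n) (tscale sa c t) \<approx> tscale sa c ((tbr br X ^^ n) t)"
proof (induct n)
  case (Suc n)
  have "tbr br X ((tbr br X ^^ n) (tscale sa c t)) \<approx> tbr br X (tscale sa c ((tbr br X ^^ n) t))"
    using Suc by (intro teq_tbr_right) (auto intro: wf_tbr_pow wf_tscale)
  also have "\<dots> \<approx> tscale sa c (tbr br X ((tbr br X ^^ n) t))"
    by (rule teqI) (simp add: tpair_tbr_tscale_right tpair_tscale)
  finally show ?case by simp
qed (simp add: teq_refl)

lemma ext_ad_pow_Suc_eq: "\<exists>t. (ext_ad X ^^ Suc m) p = (0, t)"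
  by (simp add: prod_eq_iff)

lemma snd_ext_ad_pow:
  assumes X: "wf X" "tdeg 0 X" and p: "ext_wf p"
  shows "snd ((ext_ad X ^^ Suc m) p) \<approx> (tbr br X ^^ m) (snd (ext_ad X p))"
proof (induct m)
  case (Suc m)
  obtain t where t: "(ext_ad X ^^ Suc m) p = (0, t)" using ext_ad_pow_Suc_eq by blast
  have wf_t: "wf t" using ext_wf_ext_ad_pow[OF X p, of "Suc m"] t by (simp add: ext_wf_def)
  have wf_p: "wf (snd (ext_ad X p))" using ext_wf_ext_ad[OF X p] by (simp add: ext_wf_def)
  have "snd ((ext_ad X ^^ Suc (Suc m)) p) = snd (ext_ad X (0, t))"
    using t by simp
  also have "\<dots> \<approx> tbr br X t" by (rule snd_ext_ad_0)
  also have "\<dots> \<approx> tbr br X ((tbr br X ^^ m) (snd (ext_ad X p)))"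
    using teq_tbr_right[OF wf_t wf_tbr_pow[OF X(1) wf_p]] Suc t by simp
  finally show ?case by simp
qed (simp add: teq_refl)

lemma ext_ad_pow_vanish:
  assumes N: "lcs s br N = {0}" and X: "wf X" "tdeg 0 X" and p: "ext_wf p" and k: "N < k"
  obtains t where "(ext_ad X ^^ k) p = (0, t)" "wf t" "t \<approx> []"
proof -
  obtain m where m: "k = Suc m" "N \<le> m" using k by (cases k) auto
  obtain t where t: "(ext_ad X ^^ k) p = (0, t)" using ext_ad_pow_Suc_eq m(1) by blast
  have "wf t" using ext_wf_ext_ad_pow[OF X p, of k] t by (simp add: ext_wf_def)
  moreover have "t \<approx> []"
  proof (rule teqI)
    fix \<phi> \<psi> assume l: "lin_functional sa \<phi>" "lin_functional s \<psi>"
    have "tpair \<phi> \<psi> t = tpair \<phi> \<psi> ((tbr br X ^^ m) (snd (ext_ad X p)))"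
      using teqD[OF snd_ext_ad_pow[OF X p, of m] l] t m(1) by simp
    also have "\<dots> = 0" by (rule tpair_tbr_pow_nilpotent[OF N m(2) l(2)])
    finally show "tpair \<phi> \<psi> t = tpair \<phi> \<psi> []" by simp
  qed
  ultimately show ?thesis using t that by blast
qed

lemma ext_br_ext_ad_pow_vanish:
  assumes N: "lcs s br N = {0}" and X: "wf X" "tdeg 0 X" and p: "ext_wf p" and q: "ext_wf q"
    and k: "N < k" and l: "lin_functional sa \<phi>" "lin_functional s \<psi>"
  shows "tpair \<phi> \<psi> (ext_br ((ext_ad X ^^ k) p) q) = 0" "tpair \<phi> \<psi> (ext_br q ((ext_ad X ^^ k) p)) = 0"
proof -
  obtain t where e: "(ext_ad X ^^ k) p = (0, t)" and wf_t: "wf t" and zero: "t \<approx> []"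
    using ext_ad_pow_vanish[OF N X p k] by blast
  obtain r u where q': "q = (r, u)" by (cases q)
  have "tpair \<phi> \<psi> (tdiff dA d t) = 0"
    using teqD[OF teq_tdiff[OF wf_t wf_Nil zero] l] by simp
  moreover have "tpair \<phi> \<psi> (tbr br t u) = 0"
    using teqD[OF teq_tbr_left[OF wf_t wf_Nil zero] l] by simp
  moreover have "tpair \<phi> \<psi> (tbr br u t) = 0"
    using teqD[OF teq_tbr_right[OF wf_t wf_Nil zero] l] by simp
  ultimately show "tpair \<phi> \<psi> (ext_br ((ext_ad X ^^ k) p) q) = 0"
      "tpair \<phi> \<psi> (ext_br q ((ext_ad X ^^ k) p)) = 0"
    unfolding e q' tpair_ext_br[OF l(1)] by simp_all
qed

end
section \<open>The gauge action\<close>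

context tensor_dgla
begin

lemma tpair_ext_br_sum:
  fixes M :: nat and c r :: "nat \<Rightarrow> rat" and t :: "nat \<Rightarrow> ('a, 'v) tens"
  assumes l: "lin_functional sa \<phi>"
  defines "S \<equiv> (\<Sum>k<M. c k * r k, concat (map (\<lambda>k. tscale sa (c k) (t k)) [0..<M]))"
  shows "tpair \<phi> \<psi> (ext_br S S) = (\<Sum>k<M. \<Sum>m<M. c k * c m * tpair \<phi> \<psi> (ext_br (r k, t k) (r m, t m)))"
proof -
  define D where "D k = tpair \<phi> \<psi> (tdiff dA d (t k))" for k
  define B where "B k m = tpair \<phi> \<psi> (tbr br (t k) (t m))" for k m
  have "tpair \<phi> \<psi> (tdiff dA d (snd S)) = (\<Sum>k<M. c k * D k)"
    by (simp add: S_def tdiff_concat o_def tpair_concat_upt tpair_tdiff_tscale[OF l] D_def)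
  moreover have "tpair \<phi> \<psi> (tbr br (snd S) (snd S)) = (\<Sum>k<M. \<Sum>m<M. c k * c m * B k m)"
    by (simp add: S_def tbr_concat_left o_def tpair_concat_upt tpair_tbr_concat_right
        interv_sum_list_conv_sum_set_nat atLeast0LessThan tpair_tbr_tscale_left[OF l]
        tpair_tbr_tscale_right[OF l] sum_distrib_left mult.assoc B_def)
  moreover have "(\<Sum>k<M. \<Sum>m<M. c k * c m * (r m * D k)) = (\<Sum>k<M. \<Sum>m<M. c k * c m * (r k * D m))"
    by (subst sum.swap) (simp add: mult_ac)
  ultimately show ?thesis
    unfolding S_def tpair_ext_br[OF l]
    by (simp add: D_def[symmetric] B_def[symmetric] distrib_left sum.distrib
        sum_distrib_left sum_distrib_right mult_ac del: ext_br.simps)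
qed

definition ext_exp :: "('a, 'v) tens \<Rightarrow> rat \<times> ('a, 'v) tens \<Rightarrow> nat \<Rightarrow> rat \<times> ('a, 'v) tens" where
  "ext_exp X p N = ((\<Sum>k<N. fst ((ext_ad X ^^ k) p) / fact k),
     concat (map (\<lambda>k. tscale sa (1 / fact k) (snd ((ext_ad X ^^ k) p))) [0..<N]))"

text \<open>The Cauchy product: \<open>exp (ad X)\<close> preserves the bracket, both series being finite.\<close>

lemma tpair_ext_br_ext_exp:
  assumes N: "lcs s br N = {0}" and X: "wf X" "tdeg 0 X" and p: "ext_wf p"
    and l: "lin_functional sa \<phi>" "lin_functional s \<psi>"
  shows "(\<Sum>n<2 * Suc N. (1 / fact n) * tpair \<phi> \<psi> ((tbr br X ^^ n) (ext_br p p))) =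
     tpair \<phi> \<psi> (ext_br (ext_exp X p (Suc N)) (ext_exp X p (Suc N)))"
proof -
  define M where "M = Suc N"
  define c :: "nat \<Rightarrow> rat" where "c k = 1 / fact k" for k
  define E where "E k = (ext_ad X ^^ k) p" for k
  define B where "B k m = tpair \<phi> \<psi> (ext_br (E k) (E m))" for k m
  have vanish: "B k m = 0" if "M \<le> k \<or> M \<le> m" for k m
    using that ext_br_ext_ad_pow_vanish[OF N X p ext_wf_ext_ad_pow[OF X p] _ l]
    unfolding B_def E_def M_def by auto
  have "(\<Sum>n<2 * M. (1 / fact n) * tpair \<phi> \<psi> ((tbr br X ^^ n) (ext_br p p))) =
      (\<Sum>n<2 * M. \<Sum>k\<le>n. c k * c (n - k) * B k (n - k))"
    by (intro sum.cong refl) (simp add: tpair_tbr_pow_ext_br[OF X p p l] sum_distrib_left B_def E_def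
        binomial_fact c_def)
  also have "\<dots> = (\<Sum>(k, m)\<in>{(k, m). k + m < 2 * M}. c k * c m * B k m)"
    by (rule sum.triangle_reindex[symmetric])
  also have "\<dots> = (\<Sum>(k, m)\<in>{..<M} \<times> {..<M}. c k * c m * B k m)"
  proof (rule sum.mono_neutral_right)
    show "finite {(k, m). k + m < 2 * M}"
      by (rule finite_subset[of _ "{..<2 * M} \<times> {..<2 * M}"]) auto
    show "\<forall>i\<in>{(k, m). k + m < 2 * M} - {..<M} \<times> {..<M}. (case i of (k, m) \<Rightarrow> c k * c m * B k m) = 0"
    proof
      fix i assume i: "i \<in> {(k, m). k + m < 2 * M} - {..<M} \<times> {..<M}"
      obtain k m where km: "i = (k, m)" by (cases i)
      have "M \<le> k \<or> M \<le> m" using i km by auto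
      then show "(case i of (k, m) \<Rightarrow> c k * c m * B k m) = 0" using vanish km by simp
    qed
  qed auto
  also have "\<dots> = (\<Sum>k<M. \<Sum>m<M. c k * c m * B k m)"
    by (simp add: sum.cartesian_product)
  also have "\<dots> = tpair \<phi> \<psi> (ext_br (ext_exp X p M) (ext_exp X p M))"
    using tpair_ext_br_sum[OF l(1), where M=M and c=c and r="\<lambda>k. fst (E k)" and t="\<lambda>k. snd (E k)"]
    by (simp add: ext_exp_def B_def E_def c_def)
  finally show ?thesis by (simp add: M_def)
qed

lemma wf_gauge_term: "wf X \<Longrightarrow> wf \<alpha> \<Longrightarrow> wf (gauge_term sa dA br d X \<alpha> k)"
  by (simp add: gauge_term_def wf_tscale wf_tbr_pow wf_tdiff wf_tbr)

lemma tdeg_gauge_term: "tdeg 0 X \<Longrightarrow> tdeg 1 \<alpha> \<Longrightarrow> tdeg 1 (gauge_term sa dA br d X \<alpha> k)"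
  using tdeg_tdiff[of 0 X] tdeg_tbr[of 1 \<alpha> 0 X]
  by (simp add: gauge_term_def tdeg_tscale tdeg_tbr_pow)

lemma wf_gauge_partial: "wf X \<Longrightarrow> wf \<alpha> \<Longrightarrow> wf (gauge_partial sa dA br d X \<alpha> M)"
  unfolding gauge_partial_def by (rule wf_concat) (auto simp: wf_gauge_term)

lemma tdeg_gauge_partial: "tdeg 0 X \<Longrightarrow> tdeg 1 \<alpha> \<Longrightarrow> tdeg 1 (gauge_partial sa dA br d X \<alpha> M)"
  unfolding gauge_partial_def by (rule tdeg_concat) (auto simp: tdeg_gauge_term)

lemma wf_gauge: "wf X \<Longrightarrow> wf \<alpha> \<Longrightarrow> wf (gauge sa s dA br d X \<alpha>)"
  unfolding gauge_def by (simp add: wf_tneg wf_gauge_partial)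

lemma tdeg_gauge: "tdeg 0 X \<Longrightarrow> tdeg 1 \<alpha> \<Longrightarrow> tdeg 1 (gauge sa s dA br d X \<alpha>)"
  unfolding gauge_def by (simp add: tdeg_tneg tdeg_gauge_partial)

lemma tpair_gauge_partial: "lin_functional sa \<phi> \<Longrightarrow> tpair \<phi> \<psi> (gauge_partial sa dA br d X \<alpha> M) =
   (\<Sum>j<M. (1 / fact (Suc j)) * tpair \<phi> \<psi> ((tbr br X ^^ j) (tdiff dA d X @ tbr br \<alpha> X)))"
  unfolding gauge_partial_def by (simp add: tpair_concat_upt gauge_term_def tpair_tscale)

lemma gauge_partial_stable:
  assumes N: "lcs s br N = {0}" and M: "N \<le> M"
  shows "gauge_partial sa dA br d X \<alpha> M \<approx> gauge_partial sa dA br d X \<alpha> N"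
proof (rule teqI)
  fix \<phi> \<psi> assume l: "lin_functional sa \<phi>" "lin_functional s \<psi>"
  show "tpair \<phi> \<psi> (gauge_partial sa dA br d X \<alpha> M) = tpair \<phi> \<psi> (gauge_partial sa dA br d X \<alpha> N)"
    unfolding tpair_gauge_partial[OF l(1)]
    by (rule sum.mono_neutral_left[symmetric]) (use M tpair_tbr_pow_nilpotent[OF N _ l(2)] in auto)
qed

lemma gauge_teq_partial:
  assumes N: "lcs s br N = {0}" and M: "N \<le> M"
  shows "gauge sa s dA br d X \<alpha> \<approx> \<alpha> @ tneg (gauge_partial sa dA br d X \<alpha> M)"
proof -
  let ?P = "gauge_partial sa dA br d X \<alpha>"
  let ?Q = "\<lambda>M. \<forall>M'\<ge>M. ?P M' \<approx> ?P M"
  have "?Q N" using gauge_partial_stable[OF N] by blast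
  then have "?Q (LEAST M. ?Q M)" and "(LEAST M. ?Q M) \<le> N"
    by (rule LeastI, rule Least_le)
  then have "?P (LEAST M. ?Q M) \<approx> ?P M"
    using M gauge_partial_stable[OF N M] by (meson le_trans teq_sym teq_trans)
  then show ?thesis unfolding gauge_def by (intro teq_append teq_tneg teq_refl)
qed

lemma snd_ext_ad_one:
  assumes "wf X" "tdeg 0 X" "wf \<alpha>" "tdeg 1 \<alpha>"
  shows "snd (ext_ad X (1, \<alpha>)) \<approx> tscale sa (- 1) (tdiff dA d X @ tbr br \<alpha> X)"
proof (rule teqI)
  fix \<phi> \<psi> assume l: "lin_functional sa \<phi>" "lin_functional s \<psi>"
  show "tpair \<phi> \<psi> (snd (ext_ad X (1, \<alpha>))) = tpair \<phi> \<psi> (tscale sa (- 1) (tdiff dA d X @ tbr br \<alpha> X))"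
    using teqD[OF tbr_anticomm_deg0[OF assms] l] by (simp add: tpair_tneg[OF l(1)] tpair_tscale[OF l(1)])
qed

lemma snd_ext_ad_pow_one:
  assumes X: "wf X" "tdeg 0 X" and \<alpha>: "wf \<alpha>" "tdeg 1 \<alpha>"
  shows "snd ((ext_ad X ^^ Suc j) (1, \<alpha>)) \<approx> tscale sa (- 1) ((tbr br X ^^ j) (tdiff dA d X @ tbr br \<alpha> X))"
proof -
  let ?p = "(1::rat, \<alpha>)" and ?Y = "tdiff dA d X @ tbr br \<alpha> X"
  have p: "ext_wf ?p" using \<alpha> by (simp add: ext_wf_def)
  have wf_Y: "wf ?Y" using X \<alpha> by (simp add: wf_tdiff wf_tbr)
  have "snd ((ext_ad X ^^ Suc j) ?p) \<approx> (tbr br X ^^ j) (snd (ext_ad X ?p))"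
    by (rule snd_ext_ad_pow[OF X p])
  also have "\<dots> \<approx> (tbr br X ^^ j) (tscale sa (- 1) ?Y)"
    using ext_wf_ext_ad[OF X p] wf_Y
    by (intro teq_tbr_pow X(1) snd_ext_ad_one X \<alpha>) (auto simp: ext_wf_def wf_tscale)
  also have "\<dots> \<approx> tscale sa (- 1) ((tbr br X ^^ j) ?Y)"
    by (rule tbr_pow_tscale[OF X(1) wf_Y])
  finally show ?thesis .
qed

lemma ext_exp_gauge:
  assumes X: "wf X" "tdeg 0 X" and \<alpha>: "wf \<alpha>" "tdeg 1 \<alpha>"
  shows "fst (ext_exp X (1, \<alpha>) (Suc N)) = 1"
    and "snd (ext_exp X (1, \<alpha>) (Suc N)) \<approx> \<alpha> @ tneg (gauge_partial sa dA br d X \<alpha> N)"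
proof -
  show "fst (ext_exp X (1, \<alpha>) (Suc N)) = 1"
    by (simp only: ext_exp_def fst_conv sum.lessThan_Suc_shift) simp
  let ?p = "(1::rat, \<alpha>)"
  show "snd (ext_exp X ?p (Suc N)) \<approx> \<alpha> @ tneg (gauge_partial sa dA br d X \<alpha> N)"
  proof (rule teqI)
    fix \<phi> \<psi> assume l: "lin_functional sa \<phi>" "lin_functional s \<psi>"
    have "tpair \<phi> \<psi> (snd (ext_exp X ?p (Suc N))) =
        (\<Sum>k<Suc N. (1 / fact k) * tpair \<phi> \<psi> (snd ((ext_ad X ^^ k) ?p)))"
      by (simp add: ext_exp_def tpair_concat_upt tpair_tscale[OF l(1)])
    also have "\<dots> = tpair \<phi> \<psi> \<alpha> + (\<Sum>j<N. (1 / fact (Suc j)) * tpair \<phi> \<psi> (snd ((ext_ad X ^^ Suc j) ?p)))"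
      by (subst sum.lessThan_Suc_shift) (simp del: funpow.simps)
    also have "\<dots> = tpair \<phi> \<psi> (\<alpha> @ tneg (gauge_partial sa dA br d X \<alpha> N))"
      using teqD[OF snd_ext_ad_pow_one[OF X \<alpha>] l]
      by (simp add: tpair_gauge_partial[OF l(1)] tpair_tneg[OF l(1)] tpair_tscale[OF l(1)] sum_negf
          del: funpow.simps)
    finally show "tpair \<phi> \<psi> (snd (ext_exp X ?p (Suc N))) =
        tpair \<phi> \<psi> (\<alpha> @ tneg (gauge_partial sa dA br d X \<alpha> N))" .
  qed
qed

theorem tpair_tF_gauge:
  assumes N: "lcs s br N = {0}" and X: "wf X" "tdeg 0 X" and \<alpha>: "wf \<alpha>" "tdeg 1 \<alpha>"
    and l: "lin_functional sa \<phi>" "lin_functional s \<psi>"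
  shows "tpair \<phi> \<psi> (tF sa dA br d (gauge sa s dA br d X \<alpha>)) =
    (\<Sum>n<2 * Suc N. (1 / fact n) * tpair \<phi> \<psi> ((tbr br X ^^ n) (tF sa dA br d \<alpha>)))"
proof -
  let ?p = "(1::rat, \<alpha>)" and ?P = "gauge_partial sa dA br d X \<alpha> N"
  have p: "ext_wf ?p" using \<alpha> by (simp add: ext_wf_def)
  obtain u where S: "ext_exp X ?p (Suc N) = (1, u)"
    using ext_exp_gauge(1)[OF X \<alpha>] by (metis prod.collapse)
  have u: "u \<approx> \<alpha> @ tneg ?P" using ext_exp_gauge(2)[OF X \<alpha>, where N=N] S by simp
  have wf_u: "wf u"
    using ext_wf_ext_ad_pow[OF X p] S unfolding ext_exp_def
    by (auto intro!: wf_concat wf_tscale simp: ext_wf_def)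
  have wf_P: "wf (\<alpha> @ tneg ?P)" using X \<alpha> by (simp add: wf_tneg wf_gauge_partial)
  have "tpair \<phi> \<psi> (tF sa dA br d (gauge sa s dA br d X \<alpha>)) = tpair \<phi> \<psi> (tF sa dA br d u)"
    using gauge_teq_partial[OF N order_refl] teq_sym[OF u]
    by (intro teqD[OF _ l] teq_tF wf_gauge X \<alpha> wf_u) (rule teq_trans)
  also have "\<dots> = (1 / 2) * tpair \<phi> \<psi> (ext_br (ext_exp X ?p (Suc N)) (ext_exp X ?p (Suc N)))"
    using teqD[OF ext_br_eq_tF l] S by (simp add: tpair_tscale[OF l(1)])
  also have "\<dots> = (1 / 2) * (\<Sum>n<2 * Suc N. (1 / fact n) * tpair \<phi> \<psi> ((tbr br X ^^ n) (ext_br ?p ?p)))"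
    by (simp only: tpair_ext_br_ext_exp[OF N X p l])
  also have "\<dots> = (\<Sum>n<2 * Suc N. (1 / fact n) * tpair \<phi> \<psi> ((tbr br X ^^ n) (tF sa dA br d \<alpha>)))"
  proof -
    have pow_eq: "(tbr br X ^^ n) (ext_br ?p ?p) \<approx> tscale sa 2 ((tbr br X ^^ n) (tF sa dA br d \<alpha>))" for n
      using teq_tbr_pow[OF X(1) wf_ext_br[OF p p] _ ext_br_eq_tF] tbr_pow_tscale[OF X(1) wf_tF[OF \<alpha>(1)]]
        wf_tscale wf_tF[OF \<alpha>(1)] teq_trans by blast
    have "(1 / 2) * ((1 / fact n) * tpair \<phi> \<psi> ((tbr br X ^^ n) (ext_br ?p ?p))) =
        (1 / fact n) * tpair \<phi> \<psi> ((tbr br X ^^ n) (tF sa dA br d \<alpha>))" for n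
      using teqD[OF pow_eq l] by (simp add: tpair_tscale[OF l(1)] del: ext_br.simps)
    then show ?thesis by (simp only: sum_distrib_left)
  qed
  finally show ?thesis .
qed

end

context tensor_dgla
begin

lemma tbr_pow_Nil [simp]: "(tbr br X ^^ n) [] = []"
  by (induct n) simp_all

text \<open>With \<open>C = 0\<close> this says that the gauge action preserves Maurer--Cartan elements.\<close>

theorem tF_gauge_teq:
  assumes N: "lcs s br N = {0}" and X: "wf X" "tdeg 0 X" and \<alpha>: "wf \<alpha>" "tdeg 1 \<alpha>"
    and C: "wf C" "tF sa dA br d \<alpha> \<approx> C" "tbr br X C \<approx> []"
  shows "tF sa dA br d (gauge sa s dA br d X \<alpha>) \<approx> C"
proof (rule teqI)
  fix \<phi> \<psi> assume l: "lin_functional sa \<phi>" "lin_functional s \<psi>"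
  let ?F = "tF sa dA br d \<alpha>"
  have pow_Suc: "tpair \<phi> \<psi> ((tbr br X ^^ Suc m) ?F) = 0" for m
  proof -
    have "(tbr br X ^^ Suc m) ?F \<approx> (tbr br X ^^ Suc m) C"
      by (rule teq_tbr_pow[OF X(1) wf_tF[OF \<alpha>(1)] C(1,2)])
    also have "(tbr br X ^^ Suc m) C = (tbr br X ^^ m) (tbr br X C)"
      by (simp only: funpow_Suc_right o_apply)
    also have "\<dots> \<approx> []"
      using teq_tbr_pow[OF X(1) wf_tbr[OF X(1) C(1)] wf_Nil C(3), of m] by simp
    finally show ?thesis using teqD[OF _ l] by simp
  qed
  have "tpair \<phi> \<psi> (tF sa dA br d (gauge sa s dA br d X \<alpha>)) =
      (\<Sum>n<Suc (Suc (2 * N)). (1 / fact n) * tpair \<phi> \<psi> ((tbr br X ^^ n) ?F))"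
    using tpair_tF_gauge[OF N X \<alpha> l] by simp
  also have "\<dots> = tpair \<phi> \<psi> ?F"
    by (subst sum.lessThan_Suc_shift) (simp add: pow_Suc del: funpow.simps)
  finally show "tpair \<phi> \<psi> (tF sa dA br d (gauge sa s dA br d X \<alpha>)) = tpair \<phi> \<psi> C"
    using teqD[OF C(2) l] by simp
qed

end

section \<open>Central extensions and the MC higher product\<close>

locale mc_extension =
  fixes sa :: "rat \<Rightarrow> 'a::ring \<Rightarrow> 'a" and GA :: "int \<Rightarrow> 'a set" and dA :: "'a \<Rightarrow> 'a"
    and st :: "rat \<Rightarrow> 'm::ab_group_add \<Rightarrow> 'm" and Gt :: "int \<Rightarrow> 'm set"
    and brt :: "'m \<Rightarrow> 'm \<Rightarrow> 'm" and dt :: "'m \<Rightarrow> 'm"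
    and s :: "rat \<Rightarrow> 'l::ab_group_add \<Rightarrow> 'l" and G :: "int \<Rightarrow> 'l set"
    and br :: "'l \<Rightarrow> 'l \<Rightarrow> 'l" and d :: "'l \<Rightarrow> 'l"
    and \<pi> :: "'m \<Rightarrow> 'l" and q :: int and z :: 'm
  assumes cdga: "cdga sa GA dA" and data: "mc_product_data st Gt brt dt s G br d \<pi> q z"
begin

lemma mc_product_data_conjuncts:
  "dgla st Gt brt dt" "dgla s G br d" "nilpotent_la st brt" "nilpotent_la s br"
  "dgla_hom st Gt brt dt s G br d \<pi>" "surj \<pi>"
  "\<forall>x y. \<pi> x = 0 \<longrightarrow> brt x y = 0" "\<forall>x. \<pi> x = 0 \<longrightarrow> dt x = 0"
  "q \<le> 0" "z \<in> Gt q" "z \<noteq> 0" "{x. \<pi> x = 0} = range (\<lambda>r. st r z)"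
  by (insert data[unfolded mc_product_data_def], (elim conjE, assumption)+)

lemma dgla_hom_conjuncts:
  "Vector_Spaces.linear st s \<pi>" "\<forall>i x. x \<in> Gt i \<longrightarrow> \<pi> x \<in> G i"
  "\<forall>x y. \<pi> (brt x y) = br (\<pi> x) (\<pi> y)" "\<forall>x. \<pi> (dt x) = d (\<pi> x)"
  by (insert mc_product_data_conjuncts(5)[unfolded dgla_hom_def], (elim conjE, assumption)+)

lemmas surj_\<pi> = mc_product_data_conjuncts(6)
  and brt_central = mc_product_data_conjuncts(7)[rule_format]
  and dt_central = mc_product_data_conjuncts(8)[rule_format]
  and q_nonpos = mc_product_data_conjuncts(9)
  and z_deg = mc_product_data_conjuncts(10)
  and z_nonzero = mc_product_data_conjuncts(11)
  and ker_\<pi> = mc_product_data_conjuncts(12)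
  and linear_\<pi> = dgla_hom_conjuncts(1)
  and \<pi>_deg = dgla_hom_conjuncts(2)[rule_format]
  and \<pi>_br = dgla_hom_conjuncts(3)[rule_format]
  and \<pi>_d = dgla_hom_conjuncts(4)[rule_format]

sublocale L: tensor_dgla sa GA dA s G br d
  by (rule tensor_dgla.intro[OF cdga mc_product_data_conjuncts(2)])

sublocale Lt: tensor_dgla sa GA dA st Gt brt dt
  by (rule tensor_dgla.intro[OF cdga mc_product_data_conjuncts(1)])

lemma lcs_L: obtains N where "lcs s br N = {0}"
  using mc_product_data_conjuncts(4) by (auto simp: nilpotent_la_def)

lemma lcs_Lt: obtains N where "lcs st brt N = {0}"
  using mc_product_data_conjuncts(3) by (auto simp: nilpotent_la_def)

lemma \<pi>_z: "\<pi> z = 0"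
proof -
  have "z = st 1 z" using vector_space.vector_space_assms(4)[OF Lt.vector_space_V] by simp
  then show ?thesis using ker_\<pi> by blast
qed

lemma brt_z: "w \<in> Gt j \<Longrightarrow> brt w z = 0"
  using Lt.br_anticomm[OF _ z_deg, of w j] brt_central \<pi>_z by (simp add: gsign_def)

lemma dt_z: "dt z = 0"
  using dt_central \<pi>_z by blast

lemma \<pi>_homog_comp: "\<pi> (homog_comp Gt x j) = homog_comp G (\<pi> x) j"
proof -
  let ?S = "{i. homog_comp Gt x i \<noteq> 0}"
  have "homog_comp G (\<pi> x) = (\<lambda>i. \<pi> (homog_comp Gt x i))"
  proof (rule homog_comp_unique[OF L.graded_V])
    show "finite ?S" using homog_comp_decomp[OF Lt.graded_V] by blast
    show "\<And>i. i \<notin> ?S \<Longrightarrow> \<pi> (homog_comp Gt x i) = 0" by (simp add: linear_0[OF linear_\<pi>])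
    show "\<And>i. \<pi> (homog_comp Gt x i) \<in> G i" using \<pi>_deg homog_comp_in[OF Lt.graded_V] by blast
    have "x = (\<Sum>i\<in>?S. homog_comp Gt x i)" using homog_comp_decomp[OF Lt.graded_V] by blast
    then show "\<pi> x = (\<Sum>i\<in>?S. \<pi> (homog_comp Gt x i))" by (metis linear_sum[OF linear_\<pi>])
  qed
  then show ?thesis by simp
qed

definition lift :: "int \<Rightarrow> 'l \<Rightarrow> 'm" where
  "lift j w = homog_comp Gt (SOME x. \<pi> x = w) j"

lemma lift: assumes "w \<in> G j" shows "\<pi> (lift j w) = w" "lift j w \<in> Gt j"
proof -
  have "\<pi> (SOME x. \<pi> x = w) = w" using surj_\<pi> by (metis (mono_tags) someI surjD)
  then show "\<pi> (lift j w) = w" using homog_comp_homog[OF L.graded_V assms] by (simp add: lift_def \<pi>_homog_comp)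
  show "lift j w \<in> Gt j" unfolding lift_def by (rule homog_comp_in[OF Lt.graded_V])
qed

definition tlift :: "('a, 'l) tens \<Rightarrow> ('a, 'm) tens" where
  "tlift t = map (\<lambda>(i, a, j, w). (i, a, j, lift j w)) t"

lemma tmap_tlift: "L.wf t \<Longrightarrow> tmap \<pi> (tlift t) = t"
  unfolding tlift_def tmap_def L.wf_iff by (induct t) (auto simp: lift)

lemma wf_tlift: "L.wf t \<Longrightarrow> Lt.wf (tlift t)"
  unfolding tlift_def L.wf_iff Lt.wf_iff by (auto simp: lift)

lemma tdeg_tlift: "tdeg n t \<Longrightarrow> tdeg n (tlift t)"
  unfolding tlift_def L.tdeg_iff Lt.tdeg_iff by auto

lemma tmap_tbr: "tmap \<pi> (tbr brt u v) = tbr br (tmap \<pi> u) (tmap \<pi> v)"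
proof -
  have comm: "pure_map \<pi> (pure_br brt e f) = pure_br br (pure_map \<pi> e) (pure_map \<pi> f)" for e f
    by (cases e; cases f) (simp add: \<pi>_br linear_gsign[OF linear_\<pi>])
  show ?thesis unfolding tmap_eq_map tbr_eq_concat by (simp add: map_concat o_def comm)
qed

lemma tmap_tdiff: "tmap \<pi> (tdiff dA dt u) = tdiff dA d (tmap \<pi> u)"
proof -
  have "pure_map \<pi> (pure_dA dA e) = pure_dA dA (pure_map \<pi> e)"
    and "pure_map \<pi> (pure_dV dt e) = pure_dV d (pure_map \<pi> e)" for e
    by (cases e; simp add: \<pi>_d)+
  note comm = this
  show ?thesis unfolding tmap_eq_map tdiff_eq_concat by (simp add: map_concat o_def comm)
qed

lemma tmap_tbr_pow: "tmap \<pi> ((tbr brt X ^^ n) t) = (tbr br (tmap \<pi> X) ^^ n) (tmap \<pi> t)"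
  by (induct n) (auto simp: tmap_tbr)

lemma tmap_tF: "tmap \<pi> (tF sa dA brt dt t) = tF sa dA br d (tmap \<pi> t)"
  by (simp add: tF_def tmap_tscale tmap_tbr tmap_tdiff)

lemma tmap_gauge_partial:
  "tmap \<pi> (gauge_partial sa dA brt dt X \<alpha> M) = gauge_partial sa dA br d (tmap \<pi> X) (tmap \<pi> \<alpha>) M"
  unfolding gauge_partial_def gauge_term_def
  by (simp add: tmap_concat tmap_tscale tmap_tbr_pow tmap_tdiff tmap_tbr o_def)

lemma teq_tmap: "teq sa st u u' \<Longrightarrow> teq sa s (tmap \<pi> u) (tmap \<pi> u')"
  by (rule L.teqI) (simp add: tpair_tmap Lt.teqD lin_functional_comp[OF linear_\<pi>])

lemma tmap_gauge:
  "teq sa s (tmap \<pi> (gauge sa st dA brt dt X \<alpha>)) (gauge sa s dA br d (tmap \<pi> X) (tmap \<pi> \<alpha>))"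
proof -
  obtain N1 where N1: "lcs s br N1 = {0}" by (rule lcs_L)
  obtain N2 where N2: "lcs st brt N2 = {0}" by (rule lcs_Lt)
  define N where "N = max N1 N2"
  have "teq sa s (tmap \<pi> (gauge sa st dA brt dt X \<alpha>)) (tmap \<pi> (\<alpha> @ tneg (gauge_partial sa dA brt dt X \<alpha> N)))"
    by (rule teq_tmap[OF Lt.gauge_teq_partial[OF N2]]) (simp add: N_def)
  also have "tmap \<pi> (\<alpha> @ tneg (gauge_partial sa dA brt dt X \<alpha> N)) =
      tmap \<pi> \<alpha> @ tneg (gauge_partial sa dA br d (tmap \<pi> X) (tmap \<pi> \<alpha>) N)"
    by (simp add: tmap_tneg tmap_gauge_partial)
  also have "teq sa s \<dots> (gauge sa s dA br d (tmap \<pi> X) (tmap \<pi> \<alpha>))"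
    by (rule L.teq_sym[OF L.gauge_teq_partial[OF N1]]) (simp add: N_def)
  finally show ?thesis .
qed

end

context mc_extension
begin

lemma exists_z_functional:
  obtains \<chi> where "lin_functional st \<chi>" "\<chi> z = 1" "\<And>j w. w \<in> Gt j \<Longrightarrow> j \<noteq> q \<Longrightarrow> \<chi> w = 0"
proof -
  obtain \<chi>0 where \<chi>0: "lin_functional st \<chi>0" "\<chi>0 z = 1"
    using exists_lin_functional_eq_1[OF Lt.vector_space_V z_nonzero] by blast
  let ?\<chi> = "\<lambda>x. \<chi>0 (homog_comp Gt x q)"
  have "lin_functional st ?\<chi>"
    by (rule lin_functional_comp[OF linear_homog_comp[OF Lt.graded_V] \<chi>0(1)])
  moreover have "?\<chi> z = 1" using \<chi>0(2) homog_comp_homog[OF Lt.graded_V z_deg] by simp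
  moreover have "?\<chi> w = 0" if "w \<in> Gt j" "j \<noteq> q" for j w
    using that homog_comp_homog[OF Lt.graded_V] lin_functional_0[OF \<chi>0(1)] by simp
  ultimately show ?thesis using that by blast
qed

lemma lin_functional_factor_\<pi>:
  assumes \<psi>: "lin_functional st \<psi>" and z: "\<psi> z = 0"
  obtains \<psi>' where "lin_functional s \<psi>'" "\<And>x. \<psi> x = \<psi>' (\<pi> x)"
proof -
  have resp: "\<psi> x = \<psi> x'" if "\<pi> x = \<pi> x'" for x x'
  proof -
    have "\<pi> (x - x') = 0"
      using that linear_add[OF linear_\<pi>, of x "- x'"] linear_neg[OF linear_\<pi>, of x'] by simp
    then obtain r where "x - x' = st r z" using ker_\<pi> by blast
    then have "\<psi> (x - x') = 0" using lin_functional_scale[OF \<psi>] z by simp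
    then show ?thesis using lin_functional_diff[OF \<psi>] by simp
  qed
  define \<psi>' where "\<psi>' y = \<psi> (SOME x. \<pi> x = y)" for y
  have sel: "\<pi> (SOME x. \<pi> x = y) = y" for y using surj_\<pi> by (metis (mono_tags) someI surjD)
  have eq: "\<psi> x = \<psi>' (\<pi> x)" for x unfolding \<psi>'_def by (rule resp) (simp add: sel)
  have "lin_functional s \<psi>'"
    unfolding lin_functional_def
  proof (intro conjI allI)
    fix y1 y2
    obtain x1 x2 where "\<pi> x1 = y1" "\<pi> x2 = y2" using sel by blast
    then show "\<psi>' (y1 + y2) = \<psi>' y1 + \<psi>' y2"
      using eq[of "x1 + x2"] eq[of x1] eq[of x2] linear_add[OF linear_\<pi>] lin_functional_add[OF \<psi>] by metis
  next
    fix c y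
    obtain x where "\<pi> x = y" using sel by blast
    then show "\<psi>' (s c y) = c * \<psi>' y"
      using eq[of "st c x"] eq[of x] linear_scale[OF linear_\<pi>] lin_functional_scale[OF \<psi>] by metis
  qed
  then show ?thesis using that eq by blast
qed

lemma z_coeff_deg:
  assumes t: "Lt.wf t" "tdeg n t" and \<chi>: "\<And>j w. w \<in> Gt j \<Longrightarrow> j \<noteq> q \<Longrightarrow> \<chi> w = 0"
  shows "(\<Sum>(i, a, j, w)\<leftarrow>t. sa (\<chi> w) a) \<in> GA (n - q)"
proof (rule graded_sum_list[OF L.graded_A])
  fix x assume "x \<in> set (map (\<lambda>(i, a, j, w). sa (\<chi> w) a) t)"
  then obtain i a j w where e: "(i, a, j, w) \<in> set t" "x = sa (\<chi> w) a" by auto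
  have h: "a \<in> GA i" "w \<in> Gt j" "i + j = n" using Lt.wf_mem[OF t(1)] Lt.tdeg_mem[OF t(2)] e(1) by blast+
  show "x \<in> GA (n - q)"
  proof (cases "j = q")
    case True
    then show ?thesis using e h graded_scale[OF L.graded_A] by auto
  next
    case False
    then show ?thesis using e h \<chi> graded_zero[OF L.graded_A]
      by (simp add: module.scale_zero_left[OF L.vector_space_A[unfolded module_iff_vector_space[symmetric]]])
  qed
qed

text \<open>The kernel of \<open>id \<otimes> \<pi>\<close> is \<open>A\<^sup>+ \<otimes> Z\<close>: split off the \<open>z\<close>-coordinate of the second
  factor with a functional \<open>\<chi>\<close>; what remains factors through \<open>\<pi>\<close>.\<close>

theorem ker_tmap_central:
  assumes t: "Lt.wf t" "tdeg n t" and ker: "teq sa s (tmap \<pi> t) []"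
  obtains b where "b \<in> GA (n - q)" "teq sa st t [(n - q, b, q, z)]"
proof -
  obtain \<chi> where \<chi>: "lin_functional st \<chi>" "\<chi> z = 1" "\<And>j w. w \<in> Gt j \<Longrightarrow> j \<noteq> q \<Longrightarrow> \<chi> w = 0"
    using exists_z_functional by blast
  define b where "b = (\<Sum>(i, a, j, w)\<leftarrow>t. sa (\<chi> w) a)"
  have "teq sa st t [(n - q, b, q, z)]"
  proof (rule Lt.teqI)
    fix \<phi> \<psi> assume l: "lin_functional sa \<phi>" "lin_functional st \<psi>"
    have \<phi>b: "\<phi> b = tpair \<phi> \<chi> t"
      unfolding b_def lin_functional_sum_list[OF l(1)] tpair_def
      by (rule arg_cong[where f=sum_list]) (auto simp: lin_functional_scale[OF l(1)])
    define \<psi>0 where "\<psi>0 x = \<psi> x - \<psi> z * \<chi> x" for x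
    have "lin_functional st \<psi>0"
      unfolding \<psi>0_def using l(2) \<chi>(1) by (simp add: lin_functional_def algebra_simps)
    moreover have "\<psi>0 z = 0" by (simp add: \<psi>0_def \<chi>(2))
    ultimately obtain \<psi>' where \<psi>': "lin_functional s \<psi>'" "\<And>x. \<psi>0 x = \<psi>' (\<pi> x)"
      using lin_functional_factor_\<pi> by blast
    have "tpair \<phi> \<psi>0 t = tpair \<phi> \<psi>' (tmap \<pi> t)"
      by (simp add: tpair_tmap \<psi>'(2)[symmetric])
    also have "\<dots> = 0" using L.teqD[OF ker l(1) \<psi>'(1)] by simp
    finally have "tpair \<phi> \<psi> t - \<psi> z * \<phi> b = 0"
      unfolding \<phi>b \<psi>0_def tpair_diff_right .
    then show "tpair \<phi> \<psi> t = tpair \<phi> \<psi> [(n - q, b, q, z)]" by (simp add: tpair_Cons)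
  qed
  with z_coeff_deg[OF t \<chi>(3)] show ?thesis unfolding b_def by (rule that)
qed

lemma tpair_tbr_central_right:
  assumes u: "Lt.wf u" and \<psi>: "lin_functional st \<psi>"
  shows "tpair \<phi> \<psi> (tbr brt u [(i, b, q, z)]) = 0"
proof -
  have "pure_pair \<phi> \<psi> (pure_br brt e (i, b, q, z)) = 0" if "e \<in> set u" for e
  proof -
    obtain i1 a1 j1 w1 where e: "e = (i1, a1, j1, w1)" by (cases e)
    then have "w1 \<in> Gt j1" using Lt.wf_mem[OF u] that by blast
    then show ?thesis using e brt_z lin_functional_0[OF \<psi>] by simp
  qed
  then show ?thesis by (simp add: tpair_tbr cong: map_cong)
qed

lemma tpair_tbr_central_left:
  assumes \<psi>: "lin_functional st \<psi>"
  shows "tpair \<phi> \<psi> (tbr brt [(i, b, q, z)] u) = 0"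
proof -
  have "pure_pair \<phi> \<psi> (pure_br brt (i, b, q, z) e) = 0" for e
    using brt_central \<pi>_z lin_functional_0[OF \<psi>] by (cases e) simp
  then show ?thesis by (simp add: tpair_tbr)
qed

lemma tF_append_central:
  assumes u: "Lt.wf u" and l: "lin_functional sa \<phi>" "lin_functional st \<psi>"
  shows "tpair \<phi> \<psi> (tF sa dA brt dt (u @ [(i, b, q, z)])) =
    tpair \<phi> \<psi> (tF sa dA brt dt u) + \<phi> (dA b) * \<psi> z"
proof -
  have "tpair \<phi> \<psi> (tdiff dA dt [(i, b, q, z)]) = \<phi> (dA b) * \<psi> z"
    by (simp add: tdiff_def tpair_Cons dt_z lin_functional_0[OF l(2)])
  then show ?thesis
    by (simp add: tF_def tpair_tscale[OF l(1)] tpair_tbr_central_right[OF u l(2)]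
        tpair_tbr_central_left[OF l(2)] algebra_simps)
qed

text \<open>Two lifts of the same defining system differ by some \<open>b \<otimes> z\<close>, which changes the
  representative by the coboundary \<open>d b\<close>.\<close>

lemma lifts_differ_central:
  assumes \<alpha>1: "Lt.wf \<alpha>1" "tdeg 1 \<alpha>1" and \<alpha>2: "Lt.wf \<alpha>2" "tdeg 1 \<alpha>2"
    and same: "teq sa s (tmap \<pi> \<alpha>1) \<beta>" "teq sa s (tmap \<pi> \<alpha>2) \<beta>"
  obtains b where "b \<in> GA (1 - q)" "teq sa st \<alpha>2 (\<alpha>1 @ [(1 - q, b, q, z)])"
proof -
  have "teq sa s (tmap \<pi> (\<alpha>2 @ tneg \<alpha>1)) []"
  proof (rule L.teqI)
    fix \<phi> \<psi> assume l: "lin_functional sa \<phi>" "lin_functional s \<psi>"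
    show "tpair \<phi> \<psi> (tmap \<pi> (\<alpha>2 @ tneg \<alpha>1)) = tpair \<phi> \<psi> []"
      using L.teqD[OF same(1) l] L.teqD[OF same(2) l] by (simp add: tmap_tneg tpair_tneg[OF l(1)])
  qed
  then obtain b where b: "b \<in> GA (1 - q)" "teq sa st (\<alpha>2 @ tneg \<alpha>1) [(1 - q, b, q, z)]"
    using ker_tmap_central[of "\<alpha>2 @ tneg \<alpha>1" 1] \<alpha>1 \<alpha>2 by (auto simp: Lt.wf_tneg Lt.tdeg_tneg)
  have "teq sa st \<alpha>2 (\<alpha>1 @ [(1 - q, b, q, z)])"
  proof (rule Lt.teqI)
    fix \<phi> \<psi> assume l: "lin_functional sa \<phi>" "lin_functional st \<psi>"
    show "tpair \<phi> \<psi> \<alpha>2 = tpair \<phi> \<psi> (\<alpha>1 @ [(1 - q, b, q, z)])"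
      using Lt.teqD[OF b(2) l] by (simp add: tpair_tneg[OF l(1)])
  qed
  with b(1) show ?thesis by (rule that)
qed

lemma mc_rep_differ_by_coboundary:
  assumes c: "mc_rep sa GA dA st Gt brt dt s \<pi> q z \<beta> c"
    and c': "mc_rep sa GA dA st Gt brt dt s \<pi> q z \<beta> c'"
  obtains b where "b \<in> GA (1 - q)" "c' = c + dA b"
proof -
  obtain \<alpha>1 where \<alpha>1: "Lt.wf \<alpha>1" "tdeg 1 \<alpha>1" "teq sa s (tmap \<pi> \<alpha>1) \<beta>"
    "teq sa st (tF sa dA brt dt \<alpha>1) [(2 - q, c, q, z)]"
    using c unfolding mc_rep_def by blast
  obtain \<alpha>2 where \<alpha>2: "Lt.wf \<alpha>2" "tdeg 1 \<alpha>2" "teq sa s (tmap \<pi> \<alpha>2) \<beta>"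
    "teq sa st (tF sa dA brt dt \<alpha>2) [(2 - q, c', q, z)]"
    using c' unfolding mc_rep_def by blast
  obtain b where b: "b \<in> GA (1 - q)" and \<alpha>2_eq: "teq sa st \<alpha>2 (\<alpha>1 @ [(1 - q, b, q, z)])"
    by (rule lifts_differ_central[OF \<alpha>1(1,2) \<alpha>2(1,2) \<alpha>1(3) \<alpha>2(3)])
  have wf_shift: "Lt.wf (\<alpha>1 @ [(1 - q, b, q, z)])"
    using \<alpha>1(1) b q_nonpos z_deg by (simp add: Lt.wf_iff)
  have "\<phi> c' = \<phi> (c + dA b)" if l: "lin_functional sa \<phi>" for \<phi>
  proof -
    obtain \<chi> where \<chi>: "lin_functional st \<chi>" "\<chi> z = 1" using exists_z_functional by blast
    have "tpair \<phi> \<chi> (tF sa dA brt dt \<alpha>2) = tpair \<phi> \<chi> (tF sa dA brt dt (\<alpha>1 @ [(1 - q, b, q, z)]))"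
      using Lt.teqD[OF Lt.teq_tF[OF \<alpha>2(1) wf_shift \<alpha>2_eq] l \<chi>(1)] .
    also have "\<dots> = tpair \<phi> \<chi> (tF sa dA brt dt \<alpha>1) + \<phi> (dA b)"
      using tF_append_central[OF \<alpha>1(1) l \<chi>(1)] \<chi>(2) by simp
    finally show ?thesis
      using Lt.teqD[OF \<alpha>1(4) l \<chi>(1)] Lt.teqD[OF \<alpha>2(4) l \<chi>(1)] \<chi>(2)
      by (simp add: tpair_Cons lin_functional_add[OF l])
  qed
  then have "c' = c + dA b" by (rule lin_functionals_separate[OF L.vector_space_A])
  with b show ?thesis by (rule that)
qed

theorem mc_rep_unique:
  assumes "mc_rep sa GA dA st Gt brt dt s \<pi> q z \<beta> c" "mc_rep sa GA dA st Gt brt dt s \<pi> q z \<beta> c'"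
  shows "coh_class GA dA (2 - q) c' = coh_class GA dA (2 - q) c"
proof -
  obtain b where "b \<in> GA (1 - q)" "c' = c + dA b" by (rule mc_rep_differ_by_coboundary[OF assms])
  then show ?thesis using L.coh_class_add_coboundary[of b "2 - q" c] by simp
qed

lemma mc_product_eq:
  assumes "mc_rep sa GA dA st Gt brt dt s \<pi> q z \<beta> c"
  shows "mc_product sa GA dA st Gt brt dt s \<pi> q z \<beta> = coh_class GA dA (2 - q) c"
  unfolding mc_product_def
proof (rule the_equality)
  show "\<exists>c'. mc_rep sa GA dA st Gt brt dt s \<pi> q z \<beta> c' \<and> coh_class GA dA (2 - q) c = coh_class GA dA (2 - q) c'"
    using assms by blast
qed (use mc_rep_unique[OF assms] in auto)

lemma tbr_central_teq_Nil: "Lt.wf X \<Longrightarrow> teq sa st (tbr brt X [(i, b, q, z)]) []"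
  by (rule Lt.teqI) (simp add: tpair_tbr_central_right)

theorem mc_rep_gauge:
  assumes \<alpha>: "Lt.wf \<alpha>" "tdeg 1 \<alpha>" and c: "c \<in> GA (2 - q)"
    and F: "teq sa st (tF sa dA brt dt \<alpha>) [(2 - q, c, q, z)]" and X: "L.wf X" "tdeg 0 X"
  shows "mc_rep sa GA dA st Gt brt dt s \<pi> q z (gauge sa s dA br d X (tmap \<pi> \<alpha>)) c"
proof -
  obtain N where N: "lcs st brt N = {0}" by (rule lcs_Lt)
  let ?X = "tlift X"
  have X': "Lt.wf ?X" "tdeg 0 ?X" using wf_tlift[OF X(1)] tdeg_tlift[OF X(2)] .
  have C: "Lt.wf [(2 - q, c, q, z)]" using c z_deg q_nonpos by (simp add: Lt.wf_iff)
  have "teq sa s (tmap \<pi> (gauge sa st dA brt dt ?X \<alpha>)) (gauge sa s dA br d X (tmap \<pi> \<alpha>))"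
    using tmap_gauge[of ?X \<alpha>] by (simp add: tmap_tlift[OF X(1)])
  moreover have "teq sa st (tF sa dA brt dt (gauge sa st dA brt dt ?X \<alpha>)) [(2 - q, c, q, z)]"
    by (rule Lt.tF_gauge_teq[OF N X' \<alpha> C F tbr_central_teq_Nil[OF X'(1)]])
  ultimately show ?thesis
    unfolding mc_rep_def using Lt.wf_gauge[OF X'(1) \<alpha>(1)] Lt.tdeg_gauge[OF X'(2) \<alpha>(2)] c by blast
qed

lemma mc_rep_exists:
  assumes "L.wf \<alpha>" "tdeg 1 \<alpha>" "teq sa s (tF sa dA br d \<alpha>) []"
  obtains c where "c \<in> GA (2 - q)" "teq sa st (tF sa dA brt dt (tlift \<alpha>)) [(2 - q, c, q, z)]"
proof (rule ker_tmap_central)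
  show "Lt.wf (tF sa dA brt dt (tlift \<alpha>))" by (rule Lt.wf_tF[OF wf_tlift[OF assms(1)]])
  show "tdeg (2 - q + q) (tF sa dA brt dt (tlift \<alpha>))" using Lt.tdeg_tF[OF tdeg_tlift[OF assms(2)]] by simp
  show "teq sa s (tmap \<pi> (tF sa dA brt dt (tlift \<alpha>))) []"
    using assms(3) by (simp add: tmap_tF tmap_tlift[OF assms(1)])
qed (use that in simp)

end

context mc_extension
begin

theorem gauge_defining_system:
  assumes "defining_system sa GA dA s G br d \<alpha>" and X: "L.wf X" "tdeg 0 X"
  shows "defining_system sa GA dA s G br d (gauge sa s dA br d X \<alpha>)"
proof -
  obtain N where N: "lcs s br N = {0}" by (rule lcs_L)
  have \<alpha>: "L.wf \<alpha>" "tdeg 1 \<alpha>" and F: "teq sa s (tF sa dA br d \<alpha>) []"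
    using assms(1) by (auto simp: defining_system_def)
  have "teq sa s (tF sa dA br d (gauge sa s dA br d X \<alpha>)) []"
    by (rule L.tF_gauge_teq[OF N X \<alpha> L.wf_Nil F]) (simp add: L.teq_refl)
  then show ?thesis
    using L.wf_gauge[OF X(1) \<alpha>(1)] L.tdeg_gauge[OF X(2) \<alpha>(2)] by (simp add: defining_system_def)
qed

theorem mc_product_gauge:
  assumes "defining_system sa GA dA s G br d \<alpha>" and X: "L.wf X" "tdeg 0 X"
  shows "mc_product sa GA dA st Gt brt dt s \<pi> q z (gauge sa s dA br d X \<alpha>) =
    mc_product sa GA dA st Gt brt dt s \<pi> q z \<alpha>"
proof -
  have \<alpha>: "L.wf \<alpha>" "tdeg 1 \<alpha>" "teq sa s (tF sa dA br d \<alpha>) []"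
    using assms(1) by (auto simp: defining_system_def)
  let ?\<alpha> = "tlift \<alpha>"
  have lift: "Lt.wf ?\<alpha>" "tdeg 1 ?\<alpha>" "tmap \<pi> ?\<alpha> = \<alpha>"
    using wf_tlift[OF \<alpha>(1)] tdeg_tlift[OF \<alpha>(2)] tmap_tlift[OF \<alpha>(1)] by auto
  obtain c where c: "c \<in> GA (2 - q)" "teq sa st (tF sa dA brt dt ?\<alpha>) [(2 - q, c, q, z)]"
    by (rule mc_rep_exists[OF \<alpha>])
  have "mc_rep sa GA dA st Gt brt dt s \<pi> q z \<alpha> c"
    unfolding mc_rep_def using lift c L.teq_refl by auto
  moreover have "mc_rep sa GA dA st Gt brt dt s \<pi> q z (gauge sa s dA br d X \<alpha>) c"
    using mc_rep_gauge[OF lift(1,2) c X] lift(3) by simp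
  ultimately show ?thesis by (simp add: mc_product_eq)
qed

end

theorem lemma3p6:
  fixes sa :: "rat \<Rightarrow> 'a::ring \<Rightarrow> 'a" and GA :: "int \<Rightarrow> 'a set" and dA :: "'a \<Rightarrow> 'a"
    and st :: "rat \<Rightarrow> 'm::ab_group_add \<Rightarrow> 'm" and Gt :: "int \<Rightarrow> 'm set"
    and brt :: "'m \<Rightarrow> 'm \<Rightarrow> 'm" and dt :: "'m \<Rightarrow> 'm"
    and s :: "rat \<Rightarrow> 'l::ab_group_add \<Rightarrow> 'l" and G :: "int \<Rightarrow> 'l set"
    and br :: "'l \<Rightarrow> 'l \<Rightarrow> 'l" and d :: "'l \<Rightarrow> 'l"
    and \<pi> :: "'m \<Rightarrow> 'l" and q :: int and z :: 'm
    and \<alpha> X :: "('a, 'l) tens"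
  assumes "cdga sa GA dA"
    and "mc_product_data st Gt brt dt s G br d \<pi> q z"
    and "defining_system sa GA dA s G br d \<alpha>"
    and "tplus GA G X" and "tdeg 0 X"
  shows "defining_system sa GA dA s G br d (gauge sa s dA br d X \<alpha>) \<and>
         mc_product sa GA dA st Gt brt dt s \<pi> q z (gauge sa s dA br d X \<alpha>) =
         mc_product sa GA dA st Gt brt dt s \<pi> q z \<alpha>"
proof -
  interpret mc_extension sa GA dA st Gt brt dt s G br d \<pi> q z
    using assms(1,2) by (rule mc_extension.intro)
  show ?thesis
    using gauge_defining_system[OF assms(3-5)] mc_product_gauge[OF assms(3-5)] by simp
qed

end
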